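(* Let $h$ be even, let $\psi$ be an additive character of $\mathbb{F}_{q^2}$ of conductor $q^2$, let $\chi\in\mathcal A_\psi$, and let $\theta_1,\theta_2$ be characters of $H_1'$ extending $\widetilde\psi$. Let $\widetilde\chi_i=\widetilde\chi_{\theta_i}$ for $i=1,2$. Then $$\mathrm{Ind}_{H'}^{\mathcal U}(\widetilde\chi_1)\cong\mathrm{Ind}_{H'}^{\mathcal U}(\widetilde\chi_2).$$
   Context: Let $p$ be a prime, $q$ a power of $p$, $\ell\ne p$, and $h\ge2$ an even integer. For a commutative $\mathbb{F}_q$-algebra $A$, $U_h^{2,q}(A)$ is the set of formal expressions $1+\sum_{i=1}^{2(h-1)}a_i\tau^i$ ($a_i\in A$) with multiplication obtained by extending $(a\tau^i)(b\tau^j)=ab^{q^i}\tau^{i+j}$ bi-additively, $\tau^0=1$, $\tau^k=0$ for $k>2(h-1)$. In $\mathcal U=U_h^{2,q}(\mathbb{F}_{q^2})$ let $H=\{1+\sum a_i\tau^i: a_i=0\text{ for odd } i\}$; $H_0'=\{a_i=0\text{ unless } i=2(h-1)\text{ or } i\text{ odd}>h-1\}$; $H_1'=\{a_i=0\text{ unless } i=2(h-1)\text{ or } i\text{ odd}\ge h-1;\ a_{h-1}\in\mathbb{F}_q\}$ (abelian); $H'=\{a_i=0\text{ for odd } i<h-1,\ a_{h-1}\in\mathbb{F}_q\}=H\cdot H_1'$. Let $L=\mathbb{F}_{q^2}((\pi))$, $U_L^i=1+\pi^i\mathbb{F}_{q^2}[[\pi]]$, and identify $U_L^1/U_L^h\cong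 H$ via $1+\sum_{i=1}^{h-1}a_i\pi^i\mapsto1+\sum a_i\tau^{2i}$. An additive character $\psi\colon\mathbb{F}_{q^2}\to\overline{\mathbb{Q}}_\ell^\times$ has conductor $q^2$ if there exists $x$ with $\psi(x^q)\ne\psi(x)$; $\widetilde\psi(1+\sum a_i\tau^i)=\psi(a_{2(h-1)})$ on $H_0'$. $\mathcal A_\psi$ is the set of characters $\chi$ of $U_L^1/U_L^h$ (i.e. of $H$) with $\chi(1+a\pi^{h-1})=\psi(a)$. For a character $\theta$ of $H_1'$ extending $\widetilde\psi$, $\widetilde\chi_\theta$ is the character of $H'$ given by $\widetilde\chi_\theta(kn)=\chi(k)\theta(n)$ for $k\in H$, $n\in H_1'$ (well defined and multiplicative). *)

theory Defs
  imports Complex_Main "HOL-Computational_Algebra.Primes"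
begin

text \<open>An element 1 + sum a_i tau^i of U_h^{2,q}(A) is represented by its coefficient
  function c :: nat => A with c 0 = 1 and c i = 0 for i > 2(h-1).\<close>

definition Ucar :: "nat \<Rightarrow> (nat \<Rightarrow> 'a::field) set" where
  "Ucar h = {c. c 0 = 1 \<and> (\<forall>i>2*(h-1). c i = 0)}"

text \<open>Multiplication: (a tau^i)(b tau^j) = a b^(q^i) tau^(i+j), truncated above 2(h-1).\<close>
definition umult :: "nat \<Rightarrow> nat \<Rightarrow> (nat \<Rightarrow> 'a::field) \<Rightarrow> (nat \<Rightarrow> 'a) \<Rightarrow> (nat \<Rightarrow> 'a)" where
  "umult q h c d = (\<lambda>k. if k \<le> 2*(h-1) then (\<Sum>i\<le>k. c i * (d (k-i)) ^ (q ^ i)) else 0)"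

definition Hset :: "nat \<Rightarrow> (nat \<Rightarrow> 'a::field) set" where
  "Hset h = {c \<in> Ucar h. \<forall>i. odd i \<longrightarrow> c i = 0}"

definition H0' :: "nat \<Rightarrow> (nat \<Rightarrow> 'a::field) set" where
  "H0' h = {c \<in> Ucar h. \<forall>i. i \<noteq> 0 \<and> i \<noteq> 2*(h-1) \<and> \<not>(odd i \<and> i > h-1) \<longrightarrow> c i = 0}"

definition H1' :: "nat \<Rightarrow> nat \<Rightarrow> (nat \<Rightarrow> 'a::field) set" where
  "H1' q h = {c \<in> Ucar h. (\<forall>i. i \<noteq> 0 \<and> i \<noteq> 2*(h-1) \<and> \<not>(odd i \<and> i \<ge> h-1) \<longrightarrow> c i = 0)
                          \<and> c (h-1) ^ q = c (h-1)}"

definition H' :: "nat \<Rightarrow> nat \<Rightarrow> (nat \<Rightarrow> 'a::field) set" where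
  "H' q h = {c \<in> Ucar h. (\<forall>i. odd i \<and> i < h-1 \<longrightarrow> c i = 0) \<and> c (h-1) ^ q = c (h-1)}"

definition is_char :: "'g set \<Rightarrow> ('g \<Rightarrow> 'g \<Rightarrow> 'g) \<Rightarrow> ('g \<Rightarrow> complex) \<Rightarrow> bool" where
  "is_char G m \<chi> \<longleftrightarrow> (\<forall>x\<in>G. \<chi> x \<noteq> 0) \<and> (\<forall>x\<in>G. \<forall>y\<in>G. \<chi> (m x y) = \<chi> x * \<chi> y)"

definition add_char :: "('a::field \<Rightarrow> complex) \<Rightarrow> bool" where
  "add_char \<psi> \<longleftrightarrow> (\<forall>x. \<psi> x \<noteq> 0) \<and> (\<forall>x y. \<psi> (x + y) = \<psi> x * \<psi> y)"

definition conductor_q2 :: "nat \<Rightarrow> ('a::field \<Rightarrow> complex) \<Rightarrow> bool" where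
  "conductor_q2 q \<psi> \<longleftrightarrow> (\<exists>x. \<psi> (x ^ q) \<noteq> \<psi> x)"

definition psi_tilde :: "nat \<Rightarrow> ('a::field \<Rightarrow> complex) \<Rightarrow> (nat \<Rightarrow> 'a) \<Rightarrow> complex" where
  "psi_tilde h \<psi> c = \<psi> (c (2*(h-1)))"

text \<open>Image of 1 + a pi^(h-1) under U_L^1/U_L^h = H, i.e. 1 + a tau^(2(h-1)).\<close>
definition tauTop :: "nat \<Rightarrow> 'a::field \<Rightarrow> (nat \<Rightarrow> 'a)" where
  "tauTop h a = (\<lambda>i. if i = 0 then 1 else if i = 2*(h-1) then a else 0)"

definition A_psi :: "nat \<Rightarrow> nat \<Rightarrow> ('a::field \<Rightarrow> complex) \<Rightarrow> ((nat \<Rightarrow> 'a) \<Rightarrow> complex) set" where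
  "A_psi q h \<psi> = {\<chi>. is_char (Hset h) (umult q h) \<chi> \<and> (\<forall>a. \<chi> (tauTop h a) = \<psi> a)}"

definition extends_psi_tilde :: "nat \<Rightarrow> nat \<Rightarrow> ('a::field \<Rightarrow> complex) \<Rightarrow> ((nat \<Rightarrow> 'a) \<Rightarrow> complex) \<Rightarrow> bool" where
  "extends_psi_tilde q h \<psi> \<theta> \<longleftrightarrow> is_char (H1' q h) (umult q h) \<theta> \<and> (\<forall>c\<in>H0' h. \<theta> c = psi_tilde h \<psi> c)"

definition chi_tilde :: "nat \<Rightarrow> nat \<Rightarrow> ((nat \<Rightarrow> 'a::field) \<Rightarrow> complex) \<Rightarrow> ((nat \<Rightarrow> 'a) \<Rightarrow> complex)
    \<Rightarrow> (nat \<Rightarrow> 'a) \<Rightarrow> complex" where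
  "chi_tilde q h \<chi> \<theta> g = (SOME v. \<exists>k\<in>Hset h. \<exists>n\<in>H1' q h. g = umult q h k n \<and> v = \<chi> k * \<theta> n)"

definition IndSp :: "nat \<Rightarrow> nat \<Rightarrow> (nat \<Rightarrow> 'a::field) set \<Rightarrow> ((nat \<Rightarrow> 'a) \<Rightarrow> complex)
    \<Rightarrow> ((nat \<Rightarrow> 'a) \<Rightarrow> complex) set" where
  "IndSp q h K \<chi> = {f. (\<forall>g. g \<notin> Ucar h \<longrightarrow> f g = 0) \<and>
      (\<forall>x\<in>K. \<forall>g\<in>Ucar h. f (umult q h x g) = \<chi> x * f g)}"

definition IndAct :: "nat \<Rightarrow> nat \<Rightarrow> (nat \<Rightarrow> 'a::field) \<Rightarrow> ((nat \<Rightarrow> 'a) \<Rightarrow> complex)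
    \<Rightarrow> ((nat \<Rightarrow> 'a) \<Rightarrow> complex)" where
  "IndAct q h x f = (\<lambda>g. if g \<in> Ucar h then f (umult q h g x) else 0)"

definition Ind_iso :: "nat \<Rightarrow> nat \<Rightarrow> (nat \<Rightarrow> 'a::field) set \<Rightarrow> ((nat \<Rightarrow> 'a) \<Rightarrow> complex)
    \<Rightarrow> ((nat \<Rightarrow> 'a) \<Rightarrow> complex) \<Rightarrow> bool" where
  "Ind_iso q h K \<chi>1 \<chi>2 \<longleftrightarrow> (\<exists>T. bij_betw T (IndSp q h K \<chi>1) (IndSp q h K \<chi>2) \<and>
      (\<forall>f\<in>IndSp q h K \<chi>1. \<forall>f'\<in>IndSp q h K \<chi>1. T (\<lambda>g. f g + f' g) = (\<lambda>g. T f g + T f' g)) \<and>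
      (\<forall>c. \<forall>f\<in>IndSp q h K \<chi>1. T (\<lambda>g. c * f g) = (\<lambda>g. c * T f g)) \<and>
      (\<forall>x\<in>Ucar h. \<forall>f\<in>IndSp q h K \<chi>1. T (IndAct q h x f) = IndAct q h x (T f)))"

end

theory Submission
  imports Defs "HOL-Number_Theory.Residues"
begin

text \<open>For \<open>\<beta> \<in> \<bbbF>\<^sub>q\<^sub>2\<close> the element \<open>u = 1 + \<beta>\<tau>\<^bsup>h-1\<^esup>\<close> normalises \<open>H'\<close>:
  conjugation by \<open>u\<close> changes \<open>k \<in> H\<close> only by an element of \<open>H\<^sub>0'\<close> with vanishing top
  coefficient, and moves \<open>n \<in> H\<^sub>1'\<close> by the central factor
  \<open>1 + (\<beta> - \<beta>\<^sup>q) n\<^sub>h\<^sub>-\<^sub>1 \<tau>\<^bsup>2(h-1)\<^esup>\<close>, because \<open>\<beta>\<^bsup>q\<^sup>i\<^esup>\<close> alternates between \<open>\<beta>\<close> and \<open>\<beta>\<^sup>q\<close>.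
  Hence \<open>\<chi>\<^sub>\<theta>(u x u\<^sup>-\<^sup>1) = \<chi>\<^sub>\<theta>(x) \<psi>((\<beta> - \<beta>\<^sup>q) x\<^sub>h\<^sub>-\<^sub>1)\<close>.
  Two extensions \<open>\<theta>\<^sub>1, \<theta>\<^sub>2\<close> of \<open>psi_tilde\<close> differ by a character of the coordinate
  \<open>x\<^sub>h\<^sub>-\<^sub>1 \<in> \<bbbF>\<^sub>q\<close>, and since \<open>\<psi>\<close> has conductor \<open>q\<^sup>2\<close> every such character is
  \<open>a \<mapsto> \<psi>((b - b\<^sup>q) a)\<close> for some \<open>b\<close>. So \<open>\<chi>\<^sub>2\<close> is the \<open>u\<close>-conjugate of \<open>\<chi>\<^sub>1\<close>
  for \<open>\<beta> = b\<close>, and \<open>f \<mapsto> f(u \<cdot>)\<close> is an isomorphism of the induced representations.\<close>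

section \<open>Finite fields, characters and finite groups\<close>

lemma sum_eq_single_term: "finite S \<Longrightarrow> a \<in> S \<Longrightarrow> (\<And>x. x \<in> S \<Longrightarrow> x \<noteq> a \<Longrightarrow> f x = 0) \<Longrightarrow> sum f S = f a"
  by (simp add: sum.remove[of S a])

lemma sum_char_eq_0:
  fixes \<nu> :: "'b::ab_group_add \<Rightarrow> complex"
  assumes fin: "finite S" and c: "c \<in> S" and cl: "\<And>a. a \<in> S \<Longrightarrow> a + c \<in> S" "\<And>a. a \<in> S \<Longrightarrow> a - c \<in> S"
    and mult: "\<And>a. a \<in> S \<Longrightarrow> \<nu> (a + c) = \<nu> a * \<nu> c" and ne: "\<nu> c \<noteq> 1"
  shows "sum \<nu> S = 0"
proof -
  have "sum \<nu> S = sum (\<lambda>a. \<nu> (a + c)) S"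
    by (rule sum.reindex_bij_witness[of _ "\<lambda>a. a + c" "\<lambda>a. a - c"]) (auto simp: cl)
  also have "\<dots> = \<nu> c * sum \<nu> S" by (simp add: mult sum_distrib_left mult.commute)
  finally have "(1 - \<nu> c) * sum \<nu> S = 0" by (simp add: algebra_simps)
  thus ?thesis using ne by simp
qed

lemma add_char_0: "add_char \<psi> \<Longrightarrow> \<psi> 0 = 1"
  unfolding add_char_def by (metis add_0 mult_cancel_right2)

lemma add_char_minus: "add_char \<psi> \<Longrightarrow> \<psi> x * \<psi> (- x) = 1"
  using add_char_0[of \<psi>] unfolding add_char_def by (metis add.right_inverse)

text \<open>The library version \<open>finite_field_power_card_eq_same\<close> needs the class \<open>finite_field\<close>,
  which a type of sort \<open>{field, finite}\<close> is not known to belong to.\<close>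
lemma finite_field_power_card:
  fixes x :: "'a::{field,finite}"
  shows "x ^ card (UNIV :: 'a set) = x"
proof (cases "x = 0")
  case False
  define M :: "'a monoid" where "M = \<lparr>carrier = UNIV - {0::'a}, monoid.mult = (*), one = 1\<rparr>"
  have "group M"
    by (rule groupI) (auto simp: M_def intro!: bexI[of _ "inverse _"])
  have pow: "x [^]\<^bsub>M\<^esub> n = x ^ n" for n :: nat
    by (induction n) (simp_all add: M_def mult.commute)
  have "order M = card (UNIV :: 'a set) - 1"
    by (simp add: order_def M_def card_Diff_singleton)
  then have "x ^ (card (UNIV :: 'a set) - 1) = 1"
    using group.pow_order_eq_1[OF \<open>group M\<close>, of x] False pow by (simp add: M_def)
  moreover have "Suc (card (UNIV :: 'a set) - 1) = card (UNIV :: 'a set)"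
    using finite_UNIV_card_ge_0[where 'a='a] by simp
  ultimately show ?thesis
    by (metis power_Suc2 mult_1_left)
qed (simp add: finite_UNIV_card_ge_0)

lemma CHAR_eq_prime_of_card:
  assumes "prime p" and "card (UNIV :: 'a::{field,finite} set) = p ^ n"
  shows "CHAR('a) = p"
proof -
  have "prime CHAR('a)"
    by (rule prime_CHAR_semidom) (simp add: finite_imp_CHAR_pos)
  moreover have "CHAR('a) dvd p ^ n"
    using CHAR_dvd_CARD[where 'a='a] assms(2) by simp
  ultimately show ?thesis
    using assms(1) prime_dvd_power primes_dvd_imp_eq by blast
qed

lemma (in group) inv_mem_of_finite_mult_closed:
  assumes "finite (carrier G)" and "H \<subseteq> carrier G"
    and mult_closed: "\<And>x y. x \<in> H \<Longrightarrow> y \<in> H \<Longrightarrow> x \<otimes> y \<in> H" and "x \<in> H"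
  shows "inv x \<in> H"
proof -
  have x: "x \<in> carrier G" using assms by blast
  have pow: "x [^] Suc n \<in> H" for n
    by (induction n) (use assms x in \<open>auto simp del: nat_pow_Suc simp: nat_pow_Suc2\<close>)
  define n where "n = order G + (order G - 1)"
  have "order G > 0" using assms(1) order_gt_0_iff_finite by blast
  then have "x [^] n \<otimes> x = x [^] (order G + order G)"
    by (simp add: n_def flip: nat_pow_Suc)
  also have "\<dots> = x [^] order G \<otimes> x [^] order G"
    using x by (simp add: nat_pow_mult)
  also have "\<dots> = \<one>"
    using pow_order_eq_1[OF x] by simp
  finally have "inv x = x [^] n"
    using x by (simp add: inv_equality)
  moreover have "n = Suc (n - 1)" using \<open>order G > 0\<close> by (simp add: n_def)
  ultimately show ?thesis using pow by metis
qed

section \<open>The group \<open>U\<^sub>h\<^sup>2\<^sup>,\<^sup>q\<close>\<close>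

locale tau_group =
  fixes T :: "'a::{field,finite} itself" and q h :: nat
  assumes h_ge_2: "2 \<le> h" and even_h: "even h" and q_pos: "0 < q"
    and frobenius_add: "\<And>x y :: 'a. (x + y) ^ q = x ^ q + y ^ q"
    and power_q_squared: "\<And>x :: 'a. x ^ (q^2) = x"
begin

definition mid :: nat where "mid = h - 1"

definition tdeg :: nat where "tdeg = 2*(h-1)"

lemma deg_facts: "mid \<noteq> 0" "mid < tdeg" "tdeg \<noteq> 0" "odd mid" "even tdeg" "h - 1 = mid" "2*(h-1) = tdeg"
   "h - Suc 0 = mid" "2*(h - Suc 0) = tdeg" "1 \<le> mid"
  using h_ge_2 even_h by (auto simp: mid_def tdeg_def)

lemma tdeg_mid_mid: "tdeg = mid + mid"
  using h_ge_2 even_h by (auto simp: mid_def tdeg_def)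

lemma tdeg_minus_mid: "tdeg - mid = mid" using tdeg_mid_mid by simp

lemma two_mid: "2*mid = tdeg" using tdeg_mid_mid by simp

lemmas deg_simps = deg_facts(6-9) two_mid

lemma h_Suc_mid: "h = Suc mid" using h_ge_2 by (simp add: mid_def)

lemma power_q_power_add: "(x + y::'a) ^ (q^i) = x^(q^i) + y^(q^i)"
proof (induction i)
  case (Suc i)
  have "(x + y::'a) ^ (q^Suc i) = ((x+y)^(q^i))^q" by (simp only: power_Suc2 power_mult)
  also have "\<dots> = (x^(q^i))^q + (y^(q^i))^q" using Suc frobenius_add by simp
  finally show ?case by (simp only: power_Suc2 power_mult)
qed simp

lemma zero_power_q_power: "(0::'a)^(q^i) = 0" using q_pos by simp

lemma zero_power_q: "(0::'a)^q = 0" using q_pos by simp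

lemma power_q_power_minus: "(-x::'a)^(q^i) = - (x^(q^i))"
proof -
  have "x^(q^i) + (-x)^(q^i) = 0" using power_q_power_add[of x "-x" i] zero_power_q_power[of i] by simp
  thus ?thesis by (simp add: eq_neg_iff_add_eq_0 add.commute)
qed

lemma power_q_power_diff: "(x - y::'a)^(q^i) = x^(q^i) - y^(q^i)"
  using power_q_power_add[of x "-y" i] power_q_power_minus[of y i] by simp

lemma power_q_power_sum: "(sum f A :: 'a)^(q^i) = sum (\<lambda>j. f j ^ (q^i)) A"
  by (induction A rule: infinite_finite_induct) (simp_all add: zero_power_q_power power_q_power_add)

lemma power_q_power_even: "(x::'a)^(q^(2*j)) = x"
proof (induction j)
  case (Suc j)
  have "q^(2*Suc j) = q^(2*j) * q^2" by (simp add: power_add[symmetric])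
  hence "x^(q^(2*Suc j)) = (x^(q^(2*j)))^(q^2)" by (simp only: power_mult)
  thus ?case using Suc power_q_squared by simp
qed simp

lemma power_q_power_parity: "(x::'a)^(q^i) = (if even i then x else x^q)"
proof (cases "even i")
  case True then obtain j where "i = 2*j" by blast
  thus ?thesis using power_q_power_even True by simp
next
  case False then obtain j where j: "i = 2*j+1" using oddE by blast
  have "x^(q^i) = (x^(q^(2*j)))^q" unfolding j by (simp only: power_add power_one_right power_mult)
  thus ?thesis using power_q_power_even False by simp
qed

lemma umult_eq: "umult q h c d = (\<lambda>k. if k \<le> tdeg then (\<Sum>i\<le>k. c i * (d (k-i)) ^ (q ^ i)) else 0)"
  by (simp add: umult_def tdeg_def)

lemma umult_le: "k \<le> tdeg \<Longrightarrow> umult q h c d k = (\<Sum>i\<le>k. c i * d (k-i) ^ q^i)"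
  by (simp add: umult_eq)

lemma umult_gt: "\<not> k \<le> tdeg \<Longrightarrow> umult q h c d k = (0::'a)"
  by (simp add: umult_eq)

lemma umult_assoc: "umult q h (umult q h c d) e = umult q h c (umult q h d (e::nat\<Rightarrow>'a))"
proof (rule ext)
  fix k
  show "umult q h (umult q h c d) e k = umult q h c (umult q h d e) k"
  proof (cases "k \<le> tdeg")
    case False thus ?thesis by (simp add: umult_gt)
  next
    case True
    define F where "F i l = c i * d l ^ q^i * e (k-i-l) ^ q^(i+l)" for i l
    have "umult q h (umult q h c d) e k = (\<Sum>j\<le>k. (\<Sum>i\<le>j. c i * d (j-i) ^ q^i) * e (k-j) ^ q^j)"
      using True by (simp add: umult_le)
    also have "\<dots> = (\<Sum>j\<le>k. \<Sum>i\<le>j. F i (j-i))"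
      by (rule sum.cong[OF refl], simp add: sum_distrib_right F_def)
    also have "\<dots> = (\<Sum>(i,l)\<in>{(i,l). i+l \<le> k}. F i l)"
      by (rule sum.triangle_reindex_eq[symmetric])
    also have "{(i,l). i+l \<le> k} = Sigma {..k} (\<lambda>i. {..k-i})" by auto
    also have "(\<Sum>(i,l)\<in>Sigma {..k} (\<lambda>i. {..k-i}). F i l) = (\<Sum>i\<le>k. \<Sum>l\<le>k-i. F i l)"
      by (rule sum.Sigma[symmetric]) auto
    also have "\<dots> = (\<Sum>i\<le>k. c i * (\<Sum>l\<le>k-i. d l * e (k-i-l) ^ q^l) ^ q^i)"
      by (rule sum.cong[OF refl]) (simp add: power_q_power_sum sum_distrib_left F_def power_mult_distrib
            flip: power_mult power_add mult.assoc, simp add: mult.commute add.commute)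
    also have "\<dots> = umult q h c (umult q h d e) k"
      using True by (simp add: umult_le)
    finally show ?thesis .
  qed
qed

definition uone :: "nat \<Rightarrow> 'a" where "uone = (\<lambda>i. if i = 0 then 1 else 0)"

definition Ugrp :: "(nat \<Rightarrow> 'a) monoid" where
  "Ugrp = \<lparr>carrier = Ucar h, mult = umult q h, one = uone\<rparr>"

lemma Ucar_iff: "c \<in> Ucar h \<longleftrightarrow> c 0 = 1 \<and> (\<forall>i. \<not> i \<le> tdeg \<longrightarrow> c i = 0)"
  by (auto simp: Ucar_def not_le tdeg_def)

lemma one_Ucar: "uone \<in> Ucar h" using h_ge_2 by (simp add: Ucar_iff uone_def)

lemma umult_Ucar: "c \<in> Ucar h \<Longrightarrow> d \<in> Ucar h \<Longrightarrow> umult q h c d \<in> Ucar h"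
  by (simp add: Ucar_iff umult_eq)

lemma umult_one_left: "umult q h uone x = x" if "x \<in> Ucar h" for x :: "nat \<Rightarrow> 'a"
proof
  fix k show "umult q h uone x k = x k"
  proof (cases "k \<le> tdeg")
    case True
    have "umult q h uone x k = (\<Sum>i\<le>k. uone i * x (k-i) ^ q^i)" using True by (simp add: umult_le)
    also have "\<dots> = uone 0 * x (k-0) ^ q^0" by (rule sum_eq_single_term) (auto simp: uone_def)
    finally show ?thesis by (simp add: uone_def)
  qed (use that in \<open>simp add: umult_gt Ucar_iff\<close>)
qed

lemma umult_one_right: "umult q h x uone = x" if "x \<in> Ucar h" for x :: "nat \<Rightarrow> 'a"
proof
  fix k show "umult q h x uone k = x k"
  proof (cases "k \<le> tdeg")
    case True
    have "umult q h x uone k = (\<Sum>i\<le>k. x i * uone (k-i) ^ q^i)" using True by (simp add: umult_le)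
    also have "\<dots> = x k * uone (k-k) ^ q^k" by (rule sum_eq_single_term) (auto simp: uone_def zero_power_q_power)
    finally show ?thesis by (simp add: uone_def)
  qed (use that in \<open>simp add: umult_gt Ucar_iff\<close>)
qed

lemma finite_Ucar: "finite (Ucar h :: (nat \<Rightarrow> 'a) set)"
proof -
  have "Ucar h \<subseteq> (\<lambda>f. \<lambda>i. if i \<le> tdeg then f i else (0::'a)) ` (PiE {..tdeg} (\<lambda>_. UNIV))"
  proof
    fix c :: "nat \<Rightarrow> 'a" assume c: "c \<in> Ucar h"
    have "c = (\<lambda>i. if i \<le> tdeg then restrict c {..tdeg} i else 0)"
      using c by (auto simp: Ucar_iff)
    thus "c \<in> (\<lambda>f. \<lambda>i. if i \<le> tdeg then f i else (0::'a)) ` (PiE {..tdeg} (\<lambda>_. UNIV))"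
      by (intro image_eqI[where x="restrict c {..tdeg}"]) auto
  qed
  thus ?thesis by (rule finite_subset) (intro finite_imageI finite_PiE, auto)
qed

lemma inj_on_umult_right: "inj_on (\<lambda>x. umult q h x c) (Ucar h)" if c: "c \<in> Ucar h" for c :: "nat \<Rightarrow> 'a"
proof
  fix x y assume x: "x \<in> Ucar h" and y: "y \<in> Ucar h" and eq: "umult q h x c = umult q h y c"
  show "x = y"
  proof (rule ccontr)
    assume "x \<noteq> y"
    then obtain i where "x i \<noteq> y i" by auto
    define m where "m = (LEAST i. x i \<noteq> y i)"
    have m: "x m \<noteq> y m" unfolding m_def by (rule LeastI[of _ i]) fact
    have lt: "x j = y j" if "j < m" for j using not_less_Least[of j "\<lambda>i. x i \<noteq> y i"] that m_def by auto
    have mN: "m \<le> tdeg" using m x y unfolding Ucar_iff by metis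
    have "0 = umult q h x c m - umult q h y c m" using eq by simp
    also have "\<dots> = (\<Sum>i\<le>m. (x i - y i) * c (m-i) ^ q^i)"
      using mN by (simp add: umult_le sum_subtractf[symmetric] left_diff_distrib)
    also have "\<dots> = (x m - y m) * c (m-m) ^ q^m"
      by (rule sum_eq_single_term) (auto simp: lt)
    also have "\<dots> = x m - y m" using c by (simp add: Ucar_iff)
    finally show False using m by simp
  qed
qed

lemma group_Ugrp: "group Ugrp"
proof (rule groupI)
  fix x assume x: "x \<in> carrier Ugrp"
  hence xU: "x \<in> Ucar h" by (simp add: Ugrp_def)
  have "(\<lambda>y. umult q h y x) ` Ucar h = Ucar h"
    by (rule endo_inj_surj[OF finite_Ucar]) (use umult_Ucar xU inj_on_umult_right in auto)
  then obtain y where "y \<in> Ucar h" "umult q h y x = uone" using one_Ucar by (metis imageE)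
  thus "\<exists>y\<in>carrier Ugrp. y \<otimes>\<^bsub>Ugrp\<^esub> x = \<one>\<^bsub>Ugrp\<^esub>" by (auto simp: Ugrp_def)
qed (auto simp: Ugrp_def umult_Ucar one_Ucar umult_one_left umult_assoc)

sublocale gr: group Ugrp by (rule group_Ugrp)

lemma Ugrp_simps[simp]: "carrier Ugrp = Ucar h" "mult Ugrp = umult q h" "one Ugrp = uone"
  by (simp_all add: Ugrp_def)

lemma inv_Ucar: "x \<in> Ucar h \<Longrightarrow> inv\<^bsub>Ugrp\<^esub> x \<in> Ucar h" using gr.inv_closed[of x] by simp

lemma umult_inv_cancel_left: "k \<in> Ucar h \<Longrightarrow> x \<in> Ucar h \<Longrightarrow> umult q h k (umult q h (inv\<^bsub>Ugrp\<^esub> k) x) = x"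
  using umult_assoc[of k "inv\<^bsub>Ugrp\<^esub> k" x, symmetric] gr.r_inv[of k] umult_one_left[of x] by simp

lemma inv_umult_cancel_left: "k \<in> Ucar h \<Longrightarrow> x \<in> Ucar h \<Longrightarrow> umult q h (inv\<^bsub>Ugrp\<^esub> k) (umult q h k x) = x"
  using umult_assoc[of "inv\<^bsub>Ugrp\<^esub> k" k x, symmetric] gr.l_inv[of k] umult_one_left[of x] by simp

lemma umult_diff_right: "umult q h c (\<lambda>m. a m - b m) = (\<lambda>m. umult q h c a m - umult q h c b m :: 'a)"
  by (rule ext) (simp add: umult_eq power_q_power_diff right_diff_distrib sum_subtractf)

lemma umult_add_left: "umult q h (\<lambda>m. a m + b m) c = (\<lambda>m. umult q h a c m + umult q h b c m :: 'a)"
  by (rule ext) (simp add: umult_eq distrib_right sum.distrib)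

text \<open>Left multiplication by \<open>c\<close> with \<open>c 0 = 1\<close> is unitriangular with respect to the degree.\<close>
lemma umult_left_triangular:
  fixes c y :: "nat \<Rightarrow> 'a"
  assumes c0: "c 0 = 1" and cA: "\<And>i. c i \<noteq> 0 \<Longrightarrow> A i"
    and zB: "\<And>m. m \<le> tdeg \<Longrightarrow> \<not> B m \<Longrightarrow> umult q h c y m = 0"
    and cl: "\<And>i j. A i \<Longrightarrow> B j \<Longrightarrow> i + j \<le> tdeg \<Longrightarrow> B (i+j)"
  shows "m \<le> tdeg \<Longrightarrow> \<not> B m \<Longrightarrow> y m = 0"
proof (induction m rule: less_induct)
  case (less m)
  have "0 = umult q h c y m" using zB less by simp
  also have "\<dots> = (\<Sum>i\<le>m. c i * y (m-i) ^ q^i)" using less by (simp add: umult_le)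
  also have "\<dots> = c 0 * y (m-0) ^ q^0"
  proof (rule sum_eq_single_term)
    fix i assume i: "i \<in> {..m}" "i \<noteq> 0"
    show "c i * y (m-i) ^ q^i = 0"
    proof (cases "c i = 0 \<or> y (m-i) = 0")
      case True thus ?thesis using zero_power_q_power by auto
    next
      case False
      hence "A i" using cA by auto
      moreover have "B (m-i)"
      proof (rule ccontr)
        assume "\<not> B (m-i)"
        hence "y (m-i) = 0" using less.IH[of "m-i"] i less.prems by auto
        thus False using False by simp
      qed
      ultimately have "B m" using cl[of i "m-i"] i less.prems by auto
      thus ?thesis using less.prems by simp
    qed
  qed auto
  finally show ?case using c0 by simp
qed

lemma umult_nonzero_support:
  assumes "umult q h c d m \<noteq> (0::'a)"
  shows "\<exists>i\<le>m. c i \<noteq> 0 \<and> d (m-i) \<noteq> 0 \<and> m \<le> tdeg"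
proof -
  have mN: "m \<le> tdeg" using assms by (auto simp: umult_eq split: if_splits)
  hence "(\<Sum>i\<le>m. c i * d (m-i) ^ q^i) \<noteq> 0" using assms by (simp add: umult_le)
  then obtain i where "i \<in> {..m}" "c i * d (m-i) ^ q^i \<noteq> 0"
    using sum.not_neutral_contains_not_neutral by blast
  thus ?thesis using mN zero_power_q_power by (metis atMost_iff mult_eq_0_iff)
qed

lemma Hset_iff: "c \<in> Hset h \<longleftrightarrow> c \<in> Ucar h \<and> (\<forall>i. odd i \<longrightarrow> c i = 0)"
  by (simp add: Hset_def)

lemma H0'_iff: "c \<in> H0' h \<longleftrightarrow> c \<in> Ucar h \<and> (\<forall>i. i \<noteq> 0 \<and> i \<noteq> tdeg \<and> \<not>(odd i \<and> mid < i) \<longrightarrow> c i = 0)"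
  by (simp add: H0'_def deg_simps)

lemma H1'_iff: "c \<in> H1' q h \<longleftrightarrow> c \<in> Ucar h \<and> (\<forall>i. i \<noteq> 0 \<and> i \<noteq> tdeg \<and> \<not>(odd i \<and> mid \<le> i) \<longrightarrow> c i = 0) \<and> c mid ^ q = c mid"
  by (simp add: H1'_def deg_simps)

lemma H'_iff: "c \<in> H' q h \<longleftrightarrow> c \<in> Ucar h \<and> (\<forall>i. odd i \<and> i < mid \<longrightarrow> c i = 0) \<and> c mid ^ q = c mid"
  by (simp add: H'_def deg_simps)

lemma Hset_subset_Ucar: "Hset h \<subseteq> Ucar h"
  by (auto simp: Hset_def)

lemma H1'_subset_Ucar: "H1' q h \<subseteq> Ucar h"
  by (auto simp: H1'_def)

lemma Hset_umult:
  fixes c d :: "nat \<Rightarrow> 'a"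
  assumes "c \<in> Hset h" and "d \<in> Hset h"
  shows "umult q h c d \<in> Hset h"
proof -
  have "umult q h c d i = 0" if "odd i" for i
  proof (rule ccontr)
    assume "umult q h c d i \<noteq> 0"
    then obtain j where "j \<le> i" "c j \<noteq> 0" "d (i - j) \<noteq> 0"
      using umult_nonzero_support by blast
    then show False
      using assms \<open>odd i\<close> by (cases "odd j") (auto simp: Hset_iff)
  qed
  then show ?thesis
    using assms by (auto simp: Hset_iff intro!: umult_Ucar)
qed

lemma umult_mid_coord:
  fixes c d :: "nat \<Rightarrow> 'a"
  assumes "c \<in> Ucar h" "d \<in> Ucar h" "\<And>i. odd i \<Longrightarrow> i < mid \<Longrightarrow> c i = 0" "\<And>i. odd i \<Longrightarrow> i < mid \<Longrightarrow> d i = 0"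
  shows "umult q h c d mid = c mid + d mid"
proof -
  have "umult q h c d mid = (\<Sum>i\<le>mid. c i * d (mid-i) ^ q^i)" using deg_facts(2) by (simp add: umult_le)
  also have "\<dots> = (\<Sum>i\<in>{0,mid}. c i * d (mid-i) ^ q^i)"
  proof (rule sum.mono_neutral_right)
    show "\<forall>i\<in>{..mid} - {0, mid}. c i * d (mid - i) ^ q ^ i = 0"
    proof
      fix i assume i: "i \<in> {..mid} - {0, mid}"
      show "c i * d (mid - i) ^ q ^ i = 0"
      proof (cases "odd i")
        case True thus ?thesis using assms(3) i by auto
      next
        case False
        hence "odd (mid - i)" "mid - i < mid" using i deg_facts(4) by auto
        thus ?thesis using assms(4) zero_power_q_power by simp
      qed
    qed
  qed auto
  also have "\<dots> = c mid + d mid" using deg_facts(1) assms(1,2) by (simp add: Ucar_iff)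
  finally show ?thesis .
qed

lemma H'_umult:
  fixes c d :: "nat \<Rightarrow> 'a"
  assumes c: "c \<in> H' q h" and d: "d \<in> H' q h"
  shows "umult q h c d \<in> H' q h"
proof -
  have cU: "c \<in> Ucar h" "\<And>i. odd i \<Longrightarrow> i < mid \<Longrightarrow> c i = 0" "c mid ^ q = c mid" using c by (auto simp: H'_iff)
  have dU: "d \<in> Ucar h" "\<And>i. odd i \<Longrightarrow> i < mid \<Longrightarrow> d i = 0" "d mid ^ q = d mid" using d by (auto simp: H'_iff)
  show ?thesis unfolding H'_iff
  proof (intro conjI allI impI)
    show "umult q h c d \<in> Ucar h" using umult_Ucar cU dU by blast
    fix i assume i: "odd i \<and> i < mid"
    show "umult q h c d i = 0"
    proof (rule ccontr)
      assume "umult q h c d i \<noteq> 0"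
      then obtain j where j: "j \<le> i" "c j \<noteq> 0" "d (i-j) \<noteq> 0" using umult_nonzero_support by blast
      show False
      proof (cases "odd j")
        case True thus False using j cU(2)[of j] i by auto
      next
        case False
        hence "odd (i - j)" "i - j < mid" using i j by auto
        thus False using dU(2) j by blast
      qed
    qed
  next
    show "umult q h c d mid ^ q = umult q h c d mid"
      using umult_mid_coord[OF cU(1) dU(1) cU(2) dU(2)] frobenius_add[of "c mid" "d mid"] cU(3) dU(3) by simp
  qed
qed

lemma H1'_subset_H':
  fixes c :: "nat \<Rightarrow> 'a"
  assumes c: "c \<in> H1' q h" shows "c \<in> H' q h"
proof -
  have "c \<in> Ucar h" "c mid^q = c mid" and z: "\<And>i. i\<noteq>0 \<Longrightarrow> i\<noteq>tdeg \<Longrightarrow> \<not>(odd i \<and> mid \<le> i) \<Longrightarrow> c i = 0"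
    using c by (auto simp: H1'_iff)
  moreover have "odd i \<and> i < mid \<longrightarrow> c i = 0" for i using z[of i] deg_facts(2) by (cases "i = 0") auto
  ultimately show ?thesis by (auto simp: H'_iff)
qed

lemma Hset_subset_H': "c \<in> Hset h \<Longrightarrow> c \<in> H' q h"
  using deg_facts(4) zero_power_q by (auto simp: Hset_iff H'_iff)

lemma H0'_subset_H1':
  assumes c: "c \<in> H0' h"
  shows "c \<in> H1' q h"
proof -
  have "c mid = 0" using c deg_facts(1,2) by (auto simp: H0'_iff)
  then show ?thesis using c zero_power_q by (auto simp: H0'_iff H1'_iff)
qed

lemma H1'_umult:
  fixes c d :: "nat \<Rightarrow> 'a"
  assumes c: "c \<in> H1' q h" and d: "d \<in> H1' q h"
  shows "umult q h c d \<in> H1' q h"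
proof -
  have H': "umult q h c d \<in> H' q h" using H'_umult H1'_subset_H' c d by blast
  have cz: "\<And>i. i \<noteq> 0 \<Longrightarrow> i \<noteq> tdeg \<Longrightarrow> \<not> (odd i \<and> mid \<le> i) \<Longrightarrow> c i = 0" using c by (auto simp: H1'_iff)
  have dz: "\<And>i. i \<noteq> 0 \<Longrightarrow> i \<noteq> tdeg \<Longrightarrow> \<not> (odd i \<and> mid \<le> i) \<Longrightarrow> d i = 0" using d by (auto simp: H1'_iff)
  show ?thesis
    unfolding H1'_iff
  proof (intro conjI allI impI)
    show "umult q h c d \<in> Ucar h" using H' by (simp add: H'_iff)
    show "umult q h c d mid ^ q = umult q h c d mid" using H' by (simp add: H'_iff)
    fix i assume i: "i \<noteq> 0 \<and> i \<noteq> tdeg \<and> \<not> (odd i \<and> mid \<le> i)"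
    show "umult q h c d i = 0"
    proof (rule ccontr)
      assume "umult q h c d i \<noteq> 0"
      then obtain j where j: "j \<le> i" "c j \<noteq> 0" "d (i-j) \<noteq> 0" "i \<le> tdeg" using umult_nonzero_support by blast
      have cj: "j = 0 \<or> j = tdeg \<or> (odd j \<and> mid \<le> j)" using cz j(2) by blast
      have dj: "i-j = 0 \<or> i-j = tdeg \<or> (odd (i-j) \<and> mid \<le> i-j)" using dz j(3) by blast
      show False using cj dj i j tdeg_mid_mid deg_facts(1) by auto
    qed
  qed
qed

lemma inv_Hset: "k \<in> Hset h \<Longrightarrow> inv\<^bsub>Ugrp\<^esub> k \<in> Hset h"
  by (rule gr.inv_mem_of_finite_mult_closed) (simp_all add: finite_Ucar Hset_subset_Ucar Hset_umult)

lemma inv_H1': "n \<in> H1' q h \<Longrightarrow> inv\<^bsub>Ugrp\<^esub> n \<in> H1' q h"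
  by (rule gr.inv_mem_of_finite_mult_closed) (simp_all add: finite_Ucar H1'_subset_Ucar H1'_umult)

lemma Hset_umult_left_cancel_low:
  fixes y z :: "nat \<Rightarrow> 'a"
  assumes k: "k \<in> Hset h"
    and eq: "\<And>m. m \<le> tdeg \<Longrightarrow> \<not> (odd m \<and> h \<le> m) \<Longrightarrow> umult q h k y m = umult q h k z m"
    and m: "m \<le> tdeg" "\<not> (odd m \<and> h \<le> m)"
  shows "y m = z m"
proof -
  have "(\<lambda>m. y m - z m) m = 0"
  proof (rule umult_left_triangular[where c=k and A=even and B="\<lambda>m. odd m \<and> h \<le> m"])
    show "k 0 = 1" using k by (simp add: Hset_iff Ucar_iff)
    show "\<And>i. k i \<noteq> 0 \<Longrightarrow> even i" using k by (auto simp: Hset_iff)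
    show "\<And>m. m \<le> tdeg \<Longrightarrow> \<not> (odd m \<and> h \<le> m) \<Longrightarrow> umult q h k (\<lambda>m. y m - z m) m = 0"
      using eq by (simp add: umult_diff_right)
  qed (use m in auto)
  then show ?thesis by simp
qed

lemma umult_even_part_odd_part:
  assumes x: "x \<in> H' q h" and m: "m \<le> tdeg" "\<not> (odd m \<and> h \<le> m)"
  shows "umult q h (\<lambda>i. if even i then x i else 0) (\<lambda>i. if odd i then x i else uone i) m = x m"
    (is "umult q h ?k ?n m = _")
proof -
  have xU: "x \<in> Ucar h" and xo: "\<And>i. odd i \<Longrightarrow> i < mid \<Longrightarrow> x i = 0"
    using x by (auto simp: H'_iff)
  show ?thesis
  proof (cases "even m")
    case True
    have "(\<Sum>i\<le>m. ?k i * ?n (m-i) ^ q^i) = ?k m * ?n (m-m) ^ q^m"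
    proof (rule sum_eq_single_term)
      fix i assume "i \<in> {..m}" "i \<noteq> m"
      then show "?k i * ?n (m-i) ^ q^i = 0"
        using True zero_power_q_power by (cases "even i") (auto simp: uone_def)
    qed auto
    then show ?thesis using True m by (simp add: umult_le uone_def)
  next
    case False
    then have "m \<le> mid" using m h_Suc_mid by auto
    have "(\<Sum>i\<le>m. ?k i * ?n (m-i) ^ q^i) = ?k 0 * ?n (m-0) ^ q^0"
    proof (rule sum_eq_single_term)
      fix i assume i: "i \<in> {..m}" "i \<noteq> 0"
      show "?k i * ?n (m-i) ^ q^i = 0"
      proof (cases "even i")
        case True
        then have "odd (m - i)" "m - i < mid" using i False \<open>m \<le> mid\<close> by auto
        then show ?thesis using xo zero_power_q_power by simp
      qed simp
    qed auto
    then show ?thesis using False m xU by (simp add: umult_le Ucar_iff)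
  qed
qed

lemma H'_decomp:
  fixes x :: "nat \<Rightarrow> 'a"
  assumes x: "x \<in> H' q h"
  shows "\<exists>k n. k \<in> Hset h \<and> n \<in> H1' q h \<and> x = umult q h k n \<and> n mid = x mid"
proof -
  have xU: "x \<in> Ucar h" and xo: "\<And>i. odd i \<Longrightarrow> i < mid \<Longrightarrow> x i = 0" and xq: "x mid ^ q = x mid"
    using x by (auto simp: H'_iff)
  define k where "k = (\<lambda>i. if even i then x i else 0)"
  define n0 where "n0 = (\<lambda>i. if odd i then x i else uone i)"
  have kU: "k \<in> Ucar h" using xU by (auto simp: Ucar_iff k_def)
  have kH: "k \<in> Hset h" using kU by (simp add: Hset_iff k_def)
  define n where "n = umult q h (inv\<^bsub>Ugrp\<^esub> k) x"
  have nU: "n \<in> Ucar h" unfolding n_def by (rule umult_Ucar[OF inv_Ucar[OF kU] xU])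
  have kn: "umult q h k n = x" unfolding n_def by (rule umult_inv_cancel_left[OF kU xU])
  have nB: "n m = n0 m" if "m \<le> tdeg" "\<not> (odd m \<and> h \<le> m)" for m
    by (rule Hset_umult_left_cancel_low[OF kH _ that])
      (simp add: kn, simp add: k_def n0_def umult_even_part_odd_part[OF x])
  have nmid: "n mid = x mid" using nB[of mid] deg_facts(2,4) h_Suc_mid by (simp add: n0_def)
  have "n i = 0" if "i \<noteq> 0" "i \<noteq> tdeg" "\<not> (odd i \<and> mid \<le> i)" for i
  proof (cases "i \<le> tdeg")
    case True
    then have "n i = n0 i" using nB[of i] that h_Suc_mid by auto
    then show ?thesis using that xo[of i] by (auto simp: n0_def uone_def)
  qed (use nU in \<open>simp add: Ucar_iff\<close>)
  then have "n \<in> H1' q h" using nU nmid xq by (simp add: H1'_iff)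
  then show ?thesis using kH kn nmid by blast
qed

section \<open>The elements \<open>1 + \<beta>\<tau>\<^bsup>h-1\<^esup> + \<gamma>\<tau>\<^bsup>2(h-1)\<^esup>\<close>\<close>

definition umid :: "'a \<Rightarrow> 'a \<Rightarrow> nat \<Rightarrow> 'a" where
  "umid \<beta> \<gamma> = (\<lambda>i. if i = 0 then 1 else if i = mid then \<beta> else if i = tdeg then \<gamma> else 0)"

lemma umid_Ucar: "umid \<beta> \<gamma> \<in> Ucar h" using deg_facts by (auto simp: Ucar_iff umid_def)

lemma umid_0[simp]: "umid \<beta> \<gamma> 0 = 1" by (simp add: umid_def)

lemma umid_mid[simp]: "umid \<beta> \<gamma> (mid) = \<beta>" using deg_facts by (simp add: umid_def)

lemma umid_tdeg[simp]: "umid \<beta> \<gamma> tdeg = \<gamma>" using deg_facts by (simp add: umid_def)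

lemma umid_other: "i \<noteq> 0 \<Longrightarrow> i \<noteq> mid \<Longrightarrow> i \<noteq> tdeg \<Longrightarrow> umid \<beta> \<gamma> i = 0" by (simp add: umid_def)

lemma tauTop_eq_umid: "tauTop h z = umid 0 z"
  using deg_facts by (auto simp: tauTop_def umid_def)

lemma tauTop_tdeg [simp]: "tauTop h a tdeg = a"
  using deg_facts by (simp add: tauTop_def)

lemma tauTop_H0': "tauTop h (a::'a) \<in> H0' h"
  unfolding tauTop_eq_umid H0'_iff using umid_Ucar deg_facts(1,2) by (auto simp: umid_def)

lemma umid_H1': "(a::'a) ^ q = a \<Longrightarrow> umid a 0 \<in> H1' q h"
  unfolding H1'_iff using umid_Ucar deg_facts(1,2,4) by (auto simp: umid_def)

lemma umult_umid_left: assumes "m \<le> tdeg"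
  shows "umult q h (umid \<beta> \<gamma>) n m = n m + (if mid \<le> m then \<beta> * n (m-(mid)) ^ q else 0)
     + (if m = tdeg then \<gamma> * n 0 else 0)"
proof -
  have pt: "umid \<beta> \<gamma> i * n (m-i) ^ q^i = (if i = 0 then n m else 0) + (if i = mid then \<beta> * n (m-(mid)) ^ q else 0)
     + (if i = tdeg then \<gamma> * n (m - tdeg) else 0)" for i
    using deg_facts by (cases "i = 0"; cases "i = mid"; cases "i = tdeg") (simp_all add: umid_def power_q_power_parity)
  have "umult q h (umid \<beta> \<gamma>) n m = (\<Sum>i\<le>m. umid \<beta> \<gamma> i * n (m-i) ^ q^i)" using assms by (simp add: umult_le)
  also have "\<dots> = n m + (if mid \<le> m then \<beta> * n (m-(mid)) ^ q else 0)
     + (if tdeg \<le> m then \<gamma> * n (m - tdeg) else 0)"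
    unfolding pt sum.distrib by simp
  finally show ?thesis using assms by auto
qed

lemma umult_umid_right: assumes "m \<le> tdeg"
  shows "umult q h n (umid \<beta> \<gamma>) m = n m + (if mid \<le> m then n (m-(mid)) * (if even (m-(mid)) then \<beta> else \<beta> ^ q) else 0)
     + (if m = tdeg then n 0 * \<gamma> else 0)"
proof -
  have pt: "n i * umid \<beta> \<gamma> (m-i) ^ q^i = (if i = m then n m else 0) + (if i = m-(mid) then (if mid \<le> m then n i * \<beta> ^ q^i else 0) else 0)
     + (if i = 0 then (if m = tdeg then n 0 * \<gamma> else 0) else 0)" if "i \<in> {..m}" for i
  proof -
    have im: "i \<le> m" using that by simp
    have h1: "mid \<ge> 1" "tdeg = 2*(mid)" using deg_facts by auto
    consider "m - i = 0" | "m - i = mid" | "m - i = tdeg" | "m-i \<noteq> 0" "m-i \<noteq> mid" "m-i \<noteq> tdeg" by blast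
    then show ?thesis
    proof cases
      case 1 hence i: "i = m" using im by simp
      have a: "\<not> (i = m - (mid) \<and> mid \<le> m)" using i h1 by auto
      have b: "\<not> (i = 0 \<and> m = tdeg)" using i h1 by auto
      show ?thesis using 1 i a b by (auto simp: umid_def)
    next
      case 2 hence i: "i = m - (mid)" "mid \<le> m" using im h1 by auto
      have a: "i \<noteq> m" using i h1 by auto
      have b: "\<not> (i = 0 \<and> m = tdeg)" using i h1 by auto
      show ?thesis using 2 i a b deg_facts by (auto simp: umid_def)
    next
      case 3 hence i: "i = 0" "m = tdeg" using im assms by auto
      have a: "i \<noteq> m" "i \<noteq> m - (mid)" using i h1 by auto
      show ?thesis using 3 i a deg_facts by (auto simp: umid_def)
    next
      case 4
      have a: "i \<noteq> m" "\<not> (i = m - (mid) \<and> mid \<le> m)" "\<not> (i = 0 \<and> m = tdeg)" using 4 im by auto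
      show ?thesis using 4 a zero_power_q_power by (auto simp: umid_def)
    qed
  qed
  have "umult q h n (umid \<beta> \<gamma>) m = (\<Sum>i\<le>m. n i * umid \<beta> \<gamma> (m-i) ^ q^i)" using assms by (simp add: umult_le)
  also have "\<dots> = (\<Sum>i\<le>m. (if i = m then n m else 0) + (if i = m-(mid) then (if mid \<le> m then n i * \<beta> ^ q^i else 0) else 0)
     + (if i = 0 then (if m = tdeg then n 0 * \<gamma> else 0) else 0))"
    by (rule sum.cong[OF refl]) (rule pt)
  also have "\<dots> = n m + (if mid \<le> m then n (m-(mid)) * \<beta> ^ q^(m-(mid)) else 0)
     + (if m = tdeg then n 0 * \<gamma> else 0)"
    by (simp only: sum.distrib sum.delta finite_atMost) simp
  finally show ?thesis by (simp add: power_q_power_parity)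
qed

lemma inv_umid: "inv\<^bsub>Ugrp\<^esub> (umid \<beta> \<gamma>) = umid (-\<beta>) (\<beta> * \<beta>^q - \<gamma>)"
proof (rule gr.inv_equality)
  show "umid (-\<beta>) (\<beta> * \<beta>^q - \<gamma>) \<otimes>\<^bsub>Ugrp\<^esub> umid \<beta> \<gamma> = \<one>\<^bsub>Ugrp\<^esub>"
  proof (simp, rule ext)
    fix m
    show "umult q h (umid (- \<beta>) (\<beta> * \<beta> ^ q - \<gamma>)) (umid \<beta> \<gamma>) m = uone m"
    proof (cases "m \<le> tdeg")
      case False thus ?thesis using deg_facts by (simp add: umult_gt uone_def)
    next
      case True
      have L: "umult q h (umid (- \<beta>) (\<beta> * \<beta> ^ q - \<gamma>)) (umid \<beta> \<gamma>) m = umid \<beta> \<gamma> m + (if mid \<le> m then (-\<beta>) * umid \<beta> \<gamma> (m-(mid)) ^ q else 0)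
     + (if m = tdeg then (\<beta> * \<beta> ^ q - \<gamma>) * umid \<beta> \<gamma> 0 else 0)" by (rule umult_umid_left[OF True])
      have z: "umid \<beta> \<gamma> (m - (mid)) = 0" if "mid \<le> m" "m \<noteq> mid" "m \<noteq> tdeg"
        using that True deg_facts by (intro umid_other) auto
      consider "m = 0" | "m = mid" | "m = tdeg" | "m \<noteq> 0" "m \<noteq> mid" "m \<noteq> tdeg" by blast
      then show ?thesis
      proof cases
        case 1 thus ?thesis using L deg_facts by (simp add: uone_def)
      next
        case 2 thus ?thesis using L deg_facts by (simp add: uone_def)
      next
        case 3 thus ?thesis using L deg_facts by (simp add: uone_def tdeg_minus_mid)
      next
        case 4 thus ?thesis using L z umid_other[of m] zero_power_q_power[of 1] by (simp add: uone_def)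
      qed
    qed
  qed
qed (simp_all add: umid_Ucar)

lemma inv_umid_Ucar: "inv\<^bsub>Ugrp\<^esub> (umid \<beta> \<gamma>) \<in> Ucar h" by (simp add: inv_umid umid_Ucar)

lemma umult_umid_umid: "umult q h (umid a 0) (umid a' 0) = umult q h (tauTop h (a * a'^q)) (umid (a + a') (0::'a))"
proof
  fix m show "umult q h (umid a 0) (umid a' 0) m = umult q h (tauTop h (a * a'^q)) (umid (a + a') 0) m"
  proof (cases "m \<le> tdeg")
    case False thus ?thesis by (simp add: umult_gt)
  next
    case True
    have z: "umid a' 0 (m - mid) = 0" if "mid \<le> m" "m \<noteq> mid" "m \<noteq> tdeg"
      using that True tdeg_mid_mid by (intro umid_other) auto
    show ?thesis unfolding tauTop_eq_umid umult_umid_left[OF True]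
    proof -
      consider "m = 0" | "m = mid" | "m = tdeg" | "m \<noteq> 0" "m \<noteq> mid" "m \<noteq> tdeg" by blast
      thus "umid a' 0 m + (if mid \<le> m then a * umid a' 0 (m - mid) ^ q else 0) + (if m = tdeg then 0 * umid a' 0 0 else 0) =
         umid (a + a') 0 m + (if mid \<le> m then 0 * umid (a + a') 0 (m - mid) ^ q else 0) + (if m = tdeg then a * a' ^ q * umid (a + a') 0 0 else 0)"
      proof cases
        case 1 thus ?thesis using deg_facts(1,3) by simp
      next
        case 2 thus ?thesis using deg_facts(1,2) by (simp add: add.commute)
      next
        case 3 thus ?thesis using deg_facts(1,2) less_imp_le[OF deg_facts(2)] by (simp add: tdeg_minus_mid)
      next
        case 4 thus ?thesis using z umid_other[of m] zero_power_q by simp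
      qed
    qed
  qed
qed

lemma H1'_split:
  fixes n :: "nat \<Rightarrow> 'a"
  assumes n: "n \<in> H1' q h"
  shows "n(mid := 0) \<in> H0' h \<and> n = umult q h (umid (n mid) 0) (n(mid := 0))"
proof
  have nU: "n \<in> Ucar h" and nz: "\<And>i. i \<noteq> 0 \<Longrightarrow> i \<noteq> tdeg \<Longrightarrow> \<not>(odd i \<and> mid \<le> i) \<Longrightarrow> n i = 0"
    using n by (auto simp: H1'_iff)
  have n0U: "n(mid := 0) \<in> Ucar h" using nU deg_facts(1) by (auto simp: Ucar_iff)
  show "n(mid := 0) \<in> H0' h" unfolding H0'_iff
  proof (intro conjI n0U allI impI)
    fix i assume "i \<noteq> 0 \<and> i \<noteq> tdeg \<and> \<not> (odd i \<and> mid < i)"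
    thus "(n(mid := 0)) i = 0" using nz[of i] by (cases "i = mid") auto
  qed
  show "n = umult q h (umid (n mid) 0) (n(mid := 0))"
  proof
    fix m show "n m = umult q h (umid (n mid) 0) (n(mid := 0)) m"
    proof (cases "m \<le> tdeg")
      case False thus ?thesis using nU by (simp add: umult_gt Ucar_iff)
    next
      case True
      have L: "umult q h (umid (n mid) 0) (n(mid := 0)) m = (n(mid := 0)) m + (if mid \<le> m then n mid * (n(mid := 0)) (m - mid) ^ q else 0)
         + (if m = tdeg then 0 * (n(mid := 0)) 0 else 0)" by (rule umult_umid_left[OF True])
      show ?thesis
      proof (cases "m = mid")
        case True thus ?thesis unfolding L using nU deg_facts(1,2) by (simp add: Ucar_iff)
      next
        case False
        have "(n(mid := 0)) (m - mid) = 0" if "mid \<le> m"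
        proof (cases "m - mid = mid")
          case False
          have "m - mid \<noteq> 0" "m - mid \<noteq> tdeg" "\<not> (odd (m-mid) \<and> mid \<le> m - mid)"
            using False \<open>m \<noteq> mid\<close> that True tdeg_mid_mid by auto
          thus ?thesis using nz by simp
        qed simp
        thus ?thesis unfolding L using False zero_power_q by simp
      qed
    qed
  qed
qed

lemma Hset_Int_H1'_eq_tauTop:
  assumes "t \<in> Hset h" and "t \<in> H1' q h"
  shows "t = tauTop h (t tdeg)"
proof
  fix i
  have "t i = 0" if "i \<noteq> 0" "i \<noteq> tdeg"
    using assms that by (cases "odd i") (auto simp: Hset_iff H1'_iff)
  then show "t i = tauTop h (t tdeg) i"
    using assms by (auto simp: tauTop_def deg_simps Hset_iff Ucar_iff)
qed

section \<open>The characters \<open>chi_tilde\<close>\<close>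

lemma A_psiD:
  fixes \<psi> :: "'a \<Rightarrow> complex" and \<chi> :: "(nat \<Rightarrow> 'a) \<Rightarrow> complex"
  assumes "\<chi> \<in> A_psi q h \<psi>"
  shows "\<And>a b. a \<in> Hset h \<Longrightarrow> b \<in> Hset h \<Longrightarrow> \<chi> (umult q h a b) = \<chi> a * \<chi> b"
    "\<And>a. \<chi> (tauTop h a) = \<psi> a"
  using assms by (auto simp: A_psi_def is_char_def)

lemma extends_psi_tildeD:
  fixes \<psi> :: "'a \<Rightarrow> complex" and \<theta> :: "(nat \<Rightarrow> 'a) \<Rightarrow> complex"
  assumes "extends_psi_tilde q h \<psi> \<theta>"
  shows "\<And>a b. a \<in> H1' q h \<Longrightarrow> b \<in> H1' q h \<Longrightarrow> \<theta> (umult q h a b) = \<theta> a * \<theta> b"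
    "\<And>c. c \<in> H0' h \<Longrightarrow> \<theta> c = \<psi> (c tdeg)"
  using assms by (auto simp: extends_psi_tilde_def is_char_def psi_tilde_def deg_simps)

text \<open>The two factorisations differ by an element of \<open>Hset h \<inter> H1' q h\<close>, i.e. by some
  \<open>tauTop h a\<close>, on which \<open>\<chi>\<close> and \<open>\<theta>\<close> both equal \<open>\<psi> a\<close>.\<close>

lemma chi_tilde_well_defined:
  fixes \<psi> :: "'a \<Rightarrow> complex" and \<chi> \<theta> :: "(nat \<Rightarrow> 'a) \<Rightarrow> complex" and k k2 n n2 :: "nat \<Rightarrow> 'a"
  assumes chi: "\<chi> \<in> A_psi q h \<psi>" and th: "extends_psi_tilde q h \<psi> \<theta>"
    and k: "k \<in> Hset h" "k2 \<in> Hset h" and n: "n \<in> H1' q h" "n2 \<in> H1' q h"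
    and eq: "umult q h k n = umult q h k2 n2"
  shows "\<chi> k * \<theta> n = \<chi> k2 * \<theta> n2"
proof -
  have kU: "k \<in> Ucar h" "k2 \<in> Ucar h" using k by (auto simp: Hset_iff)
  have nU: "n \<in> Ucar h" "n2 \<in> Ucar h" using n by (auto simp: H1'_iff)
  define t where "t = umult q h (inv\<^bsub>Ugrp\<^esub> k2) k"
  have tH: "t \<in> Hset h" unfolding t_def using Hset_umult inv_Hset k by blast
  then have tU: "t \<in> Ucar h" using Hset_subset_Ucar by blast
  have k2t: "umult q h k2 t = k" unfolding t_def by (rule umult_inv_cancel_left[OF kU(2,1)])
  have "umult q h t n = umult q h (inv\<^bsub>Ugrp\<^esub> k2) (umult q h k2 n2)"
    by (simp add: t_def umult_assoc eq)
  also have "\<dots> = n2"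
    using kU nU by (simp add: inv_umult_cancel_left)
  finally have tn: "umult q h t n = n2" .
  then have "t = umult q h n2 (inv\<^bsub>Ugrp\<^esub> n)"
    using gr.inv_solve_right[of t n2 n] tU nU by simp
  then have "t \<in> H1' q h" using H1'_umult inv_H1' n by simp
  then have t: "t = tauTop h (t tdeg)" using Hset_Int_H1'_eq_tauTop tH by blast
  have "\<chi> k = \<chi> k2 * \<psi> (t tdeg)"
    using A_psiD[OF chi] k(2) tH k2t t by metis
  moreover have "\<theta> n2 = \<psi> (t tdeg) * \<theta> n"
    using extends_psi_tildeD[OF th] tauTop_H0' H0'_subset_H1' n(1) tn t by metis
  ultimately show ?thesis by simp
qed

lemma chi_tilde_umult:
  fixes \<psi> :: "'a \<Rightarrow> complex" and \<chi> \<theta> :: "(nat \<Rightarrow> 'a) \<Rightarrow> complex" and k n :: "nat \<Rightarrow> 'a"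
  assumes chi: "\<chi> \<in> A_psi q h \<psi>" and th: "extends_psi_tilde q h \<psi> \<theta>"
    and k: "k \<in> Hset h" and n: "n \<in> H1' q h"
  shows "chi_tilde q h \<chi> \<theta> (umult q h k n) = \<chi> k * \<theta> n"
proof -
  let ?P = "\<lambda>v. \<exists>k2\<in>Hset h. \<exists>n2\<in>H1' q h. umult q h k n = umult q h k2 n2 \<and> v = \<chi> k2 * \<theta> n2"
  have "?P (\<chi> k * \<theta> n)" using k n by blast
  hence "?P (SOME v. ?P v)" by (rule someI)
  then obtain k2 n2 where "k2 \<in> Hset h" "n2 \<in> H1' q h" "umult q h k n = umult q h k2 n2"
     "(SOME v. ?P v) = \<chi> k2 * \<theta> n2" by blast
  thus ?thesis using chi_tilde_well_defined[OF chi th k _ n] unfolding chi_tilde_def by metis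
qed

section \<open>Conjugation by \<open>umid \<beta> \<gamma>\<close>\<close>

text \<open>Since \<open>\<beta>\<^bsup>q\<^sup>i\<^esup>\<close> is \<open>\<beta>\<close> for even and \<open>\<beta>\<^sup>q\<close> for odd \<open>i\<close>, and \<open>n\<close> lives in odd degrees
  \<open>\<ge> h - 1\<close>, commuting \<open>umid \<beta> \<gamma>\<close> past \<open>n\<close> only costs a top-degree term.\<close>
lemma umid_H1'_commute:
  assumes n: "n \<in> H1' q h"
  shows "umult q h (umid \<beta> \<gamma>) n = umult q h (umid 0 ((\<beta> - \<beta>^q) * n mid)) (umult q h n (umid \<beta> \<gamma>))"
proof (rule ext)
  fix m
  define z where "z = (\<beta> - \<beta>^q) * n mid"
  have nU: "n \<in> Ucar h" and nz: "\<And>i. i \<noteq> 0 \<Longrightarrow> i \<noteq> tdeg \<Longrightarrow> \<not>(odd i \<and> mid \<le> i) \<Longrightarrow> n i = 0"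
    and nq: "n mid ^ q = n mid" using n by (auto simp: H1'_iff)
  have n0: "n 0 = 1" using nU by (simp add: Ucar_iff)
  show "umult q h (umid \<beta> \<gamma>) n m = umult q h (umid 0 z) (umult q h n (umid \<beta> \<gamma>)) m"
  proof (cases "m \<le> tdeg")
    case False thus ?thesis by (simp add: umult_gt)
  next
    case True
    have y0: "umult q h n (umid \<beta> \<gamma>) 0 = 1" using umult_Ucar[OF nU umid_Ucar] by (simp add: Ucar_iff)
    have mid_coeff: "(if mid \<le> m then \<beta> * n (m-mid) ^ q else 0) = (if mid \<le> m then n (m-mid) * (if even (m-mid) then \<beta> else \<beta>^q) else 0) + (if m = tdeg then z else 0)"
    proof (cases "mid \<le> m")
      case False thus ?thesis using deg_facts(2) by auto
    next
      case mid: True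
      consider "m = mid" | "m = tdeg" | "m \<noteq> mid" "m \<noteq> tdeg" by blast
      thus ?thesis
      proof cases
        case 1 thus ?thesis using deg_facts(2) n0 by simp
      next
        case 2
        have "\<beta> * n mid ^ q = n mid * \<beta> ^ q + z" using nq by (simp add: z_def algebra_simps)
        thus ?thesis using 2 deg_facts(4) less_imp_le[OF deg_facts(2)] by (simp add: tdeg_minus_mid)
      next
        case 3
        have "m - mid \<noteq> 0" "m - mid \<noteq> tdeg" "\<not>(odd (m-mid) \<and> mid \<le> m - mid)" using 3 mid True tdeg_mid_mid by auto
        hence "n (m-mid) = 0" by (rule nz)
        thus ?thesis using 3 mid zero_power_q by simp
      qed
    qed
    have L: "umult q h (umid \<beta> \<gamma>) n m = n m + (if mid \<le> m then \<beta> * n (m-mid) ^ q else 0) + (if m = tdeg then \<gamma> * n 0 else 0)"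
      by (rule umult_umid_left[OF True])
    have R1: "umult q h (umid 0 z) (umult q h n (umid \<beta> \<gamma>)) m = umult q h n (umid \<beta> \<gamma>) m + (if mid \<le> m then 0 * umult q h n (umid \<beta> \<gamma>) (m-mid) ^ q else 0)
       + (if m = tdeg then z * umult q h n (umid \<beta> \<gamma>) 0 else 0)"
      by (rule umult_umid_left[OF True])
    have R2: "umult q h n (umid \<beta> \<gamma>) m = n m + (if mid \<le> m then n (m-mid) * (if even (m-mid) then \<beta> else \<beta> ^ q) else 0)
     + (if m = tdeg then n 0 * \<gamma> else 0)" by (rule umult_umid_right[OF True])
    show ?thesis unfolding L R1 R2 y0 n0 using mid_coeff by simp
  qed
qed

lemma conj_umid_H1':
  assumes n: "n \<in> H1' q h"
  shows "umult q h (umult q h (umid \<beta> \<gamma>) n) (inv\<^bsub>Ugrp\<^esub> (umid \<beta> \<gamma>))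
    = umult q h (tauTop h ((\<beta> - \<beta>^q) * n mid)) n"
proof -
  have nU: "n \<in> Ucar h" using n by (simp add: H1'_iff)
  have "umult q h (umult q h (umid \<beta> \<gamma>) n) (inv\<^bsub>Ugrp\<^esub> (umid \<beta> \<gamma>))
      = umult q h (tauTop h ((\<beta> - \<beta>^q) * n mid))
          (umult q h n (umult q h (umid \<beta> \<gamma>) (inv\<^bsub>Ugrp\<^esub> (umid \<beta> \<gamma>))))"
    unfolding umid_H1'_commute[OF n] tauTop_eq_umid by (simp add: umult_assoc)
  then show ?thesis
    using gr.r_inv[of "umid \<beta> \<gamma>"] umid_Ucar umult_one_right[OF nU] by simp
qed

lemma umid_Hset_commutator_support:
  assumes k: "k \<in> Hset h" and ne: "umult q h (umid \<beta> \<gamma>) k m - umult q h k (umid \<beta> \<gamma>) m \<noteq> 0"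
  shows "odd m \<and> h \<le> m \<and> m \<le> tdeg"
proof -
  have kU: "k \<in> Ucar h" and ko: "\<And>i. odd i \<Longrightarrow> k i = 0" using k by (auto simp: Hset_iff)
  have k0: "k 0 = 1" using kU by (simp add: Ucar_iff)
  have mN: "m \<le> tdeg"
  proof (rule ccontr)
    assume "\<not> m \<le> tdeg" thus False using ne by (simp add: umult_gt)
  qed
  have D: "umult q h (umid \<beta> \<gamma>) k m - umult q h k (umid \<beta> \<gamma>) m =
     (if mid \<le> m then \<beta> * k (m-mid) ^ q - k (m-mid) * (if even (m-mid) then \<beta> else \<beta>^q) else 0)"
    using mN by (simp add: umult_umid_left umult_umid_right k0)
  have mid: "mid \<le> m" using ne D by (auto split: if_splits)
  have "even (m - mid)"
  proof (rule ccontr)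
    assume "odd (m - mid)"
    hence "k (m - mid) = 0" by (rule ko)
    thus False using ne D mid zero_power_q by simp
  qed
  moreover have "m - mid \<noteq> 0" using ne D mid k0 by auto
  moreover have "odd mid" by (rule deg_facts)
  ultimately show ?thesis using mid mN h_Suc_mid by auto
qed

lemma umult_umid_right_trivial:
  assumes B: "\<And>m. d m \<noteq> 0 \<Longrightarrow> odd m \<and> h \<le> m \<and> m \<le> tdeg"
  shows "umult q h d (umid \<beta> \<gamma>) = (d :: nat \<Rightarrow> 'a)"
proof (rule ext)
  fix m
  show "umult q h d (umid \<beta> \<gamma>) m = d m"
  proof (cases "m \<le> tdeg")
    case False thus ?thesis using B by (auto simp: umult_gt)
  next
    case True
    have d0: "d 0 = 0" using B h_ge_2 by fastforce
    have dz: "d (m - mid) = 0" if "mid \<le> m"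
    proof (rule ccontr)
      assume "d (m - mid) \<noteq> 0"
      hence "h \<le> m - mid" using B by blast
      thus False using True that tdeg_mid_mid h_Suc_mid by linarith
    qed
    have dz': "(if mid \<le> m then d (m - mid) * X else 0) = 0" for X using dz by simp
    show ?thesis unfolding umult_umid_right[OF True] dz' using d0 by simp
  qed
qed

lemma conj_umid_Hset:
  assumes k: "k \<in> Hset h"
  shows "\<exists>w. w \<in> H0' h \<and> w tdeg = 0 \<and> umult q h (umult q h (umid \<beta> \<gamma>) k) (inv\<^bsub>Ugrp\<^esub> (umid \<beta> \<gamma>)) = umult q h k w"
proof -
  let ?u = "umid \<beta> \<gamma>" let ?v = "inv\<^bsub>Ugrp\<^esub> (umid \<beta> \<gamma>)"
  have kU: "k \<in> Ucar h" and ko: "\<And>i. odd i \<Longrightarrow> k i = 0" using k by (auto simp: Hset_iff)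
  define d where "d m = umult q h ?u k m - umult q h k ?u m" for m
  have dB: "\<And>m. d m \<noteq> 0 \<Longrightarrow> odd m \<and> h \<le> m \<and> m \<le> tdeg" unfolding d_def using umid_Hset_commutator_support[OF k] by blast
  have uk: "umult q h ?u k = (\<lambda>m. umult q h k ?u m + d m)" by (rule ext) (simp add: d_def)
  have kuv: "umult q h (umult q h k ?u) ?v = k"
    using umult_assoc gr.r_inv[of ?u] umid_Ucar umult_one_right[OF kU] by simp
  have dv: "umult q h d ?v = d" unfolding inv_umid by (rule umult_umid_right_trivial) (rule dB)
  define P where "P = (\<lambda>m. k m + d m)"
  have uP: "umult q h (umult q h ?u k) ?v = P"
    unfolding uk umult_add_left kuv dv P_def ..
  have PU: "P \<in> Ucar h" unfolding uP[symmetric] using umult_Ucar[OF umult_Ucar[OF umid_Ucar kU] inv_umid_Ucar] .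
  define w where "w = umult q h (inv\<^bsub>Ugrp\<^esub> k) P"
  have wU: "w \<in> Ucar h" unfolding w_def using umult_Ucar[OF inv_Ucar[OF kU] PU] .
  have kw: "umult q h k w = P" unfolding w_def by (rule umult_inv_cancel_left[OF kU PU])
  have wB: "w m = uone m" if "m \<le> tdeg" "\<not> (odd m \<and> h \<le> m)" for m
  proof (rule Hset_umult_left_cancel_low[OF k _ that])
    fix m assume "m \<le> tdeg" "\<not> (odd m \<and> h \<le> m)"
    then have "d m = 0" using dB by blast
    then show "umult q h k w m = umult q h k uone m"
      by (simp add: kw umult_one_right[OF kU] P_def)
  qed
  have "w \<in> H0' h"
    unfolding H0'_iff
  proof (intro conjI wU allI impI)
    fix i assume i: "i \<noteq> 0 \<and> i \<noteq> tdeg \<and> \<not> (odd i \<and> mid < i)"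
    show "w i = 0"
    proof (cases "i \<le> tdeg")
      case True thus ?thesis using wB[of i] i h_Suc_mid by (auto simp: uone_def)
    next
      case False thus ?thesis using wU by (simp add: Ucar_iff)
    qed
  qed
  moreover have "w tdeg = 0" using wB[of tdeg] deg_facts(3,5) by (simp add: uone_def)
  moreover have "umult q h (umult q h ?u k) ?v = umult q h k w" using uP kw by simp
  ultimately show ?thesis by blast
qed

lemma conj_umult:
  fixes a b u :: "nat \<Rightarrow> 'a"
  assumes "a \<in> Ucar h" "b \<in> Ucar h" "u \<in> Ucar h"
  shows "umult q h (umult q h u (umult q h a b)) (inv\<^bsub>Ugrp\<^esub> u) =
    umult q h (umult q h (umult q h u a) (inv\<^bsub>Ugrp\<^esub> u)) (umult q h (umult q h u b) (inv\<^bsub>Ugrp\<^esub> u))"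
  using assms by (simp add: umult_assoc inv_umult_cancel_left umult_Ucar inv_Ucar)

lemma chi_tilde_conj_umid:
  fixes \<psi> :: "'a \<Rightarrow> complex" and \<chi> \<theta> :: "(nat \<Rightarrow> 'a) \<Rightarrow> complex" and x :: "nat \<Rightarrow> 'a"
  assumes psi: "add_char \<psi>" and chi: "\<chi> \<in> A_psi q h \<psi>" and th: "extends_psi_tilde q h \<psi> \<theta>"
    and x: "x \<in> H' q h"
  shows "umult q h (umult q h (umid \<beta> \<gamma>) x) (inv\<^bsub>Ugrp\<^esub> (umid \<beta> \<gamma>)) \<in> H' q h \<and>
    chi_tilde q h \<chi> \<theta> (umult q h (umult q h (umid \<beta> \<gamma>) x) (inv\<^bsub>Ugrp\<^esub> (umid \<beta> \<gamma>)))
      = chi_tilde q h \<chi> \<theta> x * \<psi> ((\<beta> - \<beta>^q) * x mid)"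
proof -
  note thmu = extends_psi_tildeD(1)[OF th] and tht = extends_psi_tildeD(2)[OF th]
  let ?u = "umid \<beta> \<gamma>" let ?v = "inv\<^bsub>Ugrp\<^esub> (umid \<beta> \<gamma>)"
  obtain k n where k: "k \<in> Hset h" and n: "n \<in> H1' q h" and xkn: "x = umult q h k n" and nx: "n mid = x mid"
    using H'_decomp[OF x] by blast
  have kU: "k \<in> Ucar h" using k by (simp add: Hset_iff)
  have nU: "n \<in> Ucar h" using n by (simp add: H1'_iff)
  define z where "z = (\<beta> - \<beta>^q) * n mid"
  have cn: "umult q h (umult q h ?u n) ?v = umult q h (tauTop h z) n"
    unfolding z_def by (rule conj_umid_H1'[OF n])
  obtain w where w: "w \<in> H0' h" "w tdeg = 0" and ck: "umult q h (umult q h ?u k) ?v = umult q h k w"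
    using conj_umid_Hset[OF k] by blast
  define m where "m = umult q h w (umult q h (tauTop h z) n)"
  have tz: "tauTop h z \<in> H1' q h" using H0'_subset_H1' tauTop_H0' by blast
  have mH: "m \<in> H1' q h" unfolding m_def using H1'_umult H0'_subset_H1'[OF w(1)] tz n by blast
  have eq: "umult q h (umult q h ?u x) ?v = umult q h k m"
    unfolding xkn conj_umult[OF kU nU umid_Ucar] ck cn m_def by (simp add: umult_assoc)
  have "umult q h k m \<in> H' q h" using H'_umult Hset_subset_H'[OF k] H1'_subset_H'[OF mH] by blast
  moreover have "chi_tilde q h \<chi> \<theta> (umult q h k m) = \<chi> k * \<theta> m"
    by (rule chi_tilde_umult[OF chi th k mH])
  moreover have "\<theta> m = \<theta> n * \<psi> z"
  proof -
    have "\<theta> m = \<theta> w * (\<theta> (tauTop h z) * \<theta> n)"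
      unfolding m_def using thmu H0'_subset_H1'[OF w(1)] tz n H1'_umult by metis
    also have "\<theta> w = 1" using tht[OF w(1)] w(2) add_char_0[OF psi] by simp
    also have "\<theta> (tauTop h z) = \<psi> z" using tht[OF tauTop_H0'[of z]] by simp
    finally show ?thesis by simp
  qed
  moreover have "chi_tilde q h \<chi> \<theta> x = \<chi> k * \<theta> n"
    unfolding xkn by (rule chi_tilde_umult[OF chi th k n])
  ultimately show ?thesis using eq nx z_def by simp
qed

section \<open>Extensions of \<open>psi_tilde\<close>\<close>

text \<open>Shifting \<open>b\<close> by \<open>x / a\<close> multiplies each summand by \<open>\<psi> (x\<^sup>q - x) \<noteq> 1\<close>.\<close>
lemma sum_psi_twist_eq_0:
  fixes \<psi> :: "'a \<Rightarrow> complex"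
  assumes psi: "add_char \<psi>" and cond: "conductor_q2 q \<psi>" and a: "a^q = a" "a \<noteq> 0"
  shows "(\<Sum>b\<in>UNIV. \<psi> (-((b - b^q) * a))) = 0"
proof -
  have pa: "\<And>x y. \<psi> (x + y) = \<psi> x * \<psi> y" using psi by (simp add: add_char_def)
  obtain x where x: "\<psi> (x^q) \<noteq> \<psi> x" using cond by (auto simp: conductor_q2_def)
  show ?thesis
  proof (rule sum_char_eq_0[of UNIV "x / a"])
    show "\<psi> (-((b + x/a - (b + x/a)^q) * a)) = \<psi> (-((b - b^q) * a)) * \<psi> (-((x/a - (x/a)^q) * a))" for b
    proof -
      have "\<psi> (-((b + x/a - (b + x/a)^q) * a)) = \<psi> (-((b - b^q) * a) + -((x/a - (x/a)^q) * a))"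
        by (rule arg_cong[where f=\<psi>]) (simp add: algebra_simps frobenius_add)
      also have "\<dots> = \<psi> (-((b - b^q) * a)) * \<psi> (-((x/a - (x/a)^q) * a))" by (rule pa)
      finally show ?thesis .
    qed
    have "-((x/a - (x/a)^q) * a) = x^q - x" using a by (simp add: power_divide field_simps)
    moreover have "\<psi> (x^q - x) \<noteq> 1"
      using pa[of "x^q - x" x] x by auto
    ultimately show "\<psi> (-((x/a - (x/a)^q) * a)) \<noteq> 1" by simp
  qed auto
qed

lemma sum_Fq_char_twist_eq_0:
  fixes \<psi> lam :: "'a \<Rightarrow> complex"
  assumes psi: "add_char \<psi>"
    and lm: "\<And>a b. a^q = a \<Longrightarrow> b^q = b \<Longrightarrow> lam (a + b) = lam a * lam b"
    and a0: "a0^q = a0" "lam a0 \<noteq> \<psi> ((b - b^q) * a0)"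
  shows "(\<Sum>a\<in>{a. a^q = a}. lam a * \<psi> (-((b - b^q) * a))) = 0"
proof (rule sum_char_eq_0[where c=a0])
  have pa: "\<And>x y. \<psi> (x + y) = \<psi> x * \<psi> y" using psi by (simp add: add_char_def)
  show "a + a0 \<in> {a. a^q = a}" "a - a0 \<in> {a. a^q = a}" if "a \<in> {a. a^q = a}" for a
    using that a0 frobenius_add power_q_power_diff[of a a0 1] by auto
  show "lam (a + a0) * \<psi> (-((b - b^q) * (a + a0)))
      = lam a * \<psi> (-((b - b^q) * a)) * (lam a0 * \<psi> (-((b - b^q) * a0)))" if "a \<in> {a. a^q = a}" for a
  proof -
    have "\<psi> (-((b - b^q) * (a + a0))) = \<psi> (-((b - b^q) * a) + -((b - b^q) * a0))"
      by (rule arg_cong[where f=\<psi>]) (simp add: algebra_simps)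
    also have "\<dots> = \<psi> (-((b - b^q) * a)) * \<psi> (-((b - b^q) * a0))" by (rule pa)
    finally show ?thesis using lm[of a a0] that a0 by simp
  qed
  have "\<psi> ((b - b^q) * a0) * \<psi> (-((b - b^q) * a0)) = 1"
    using add_char_minus[OF psi] .
  then show "lam a0 * \<psi> (-((b - b^q) * a0)) \<noteq> 1"
    using a0(2) by (metis mult_right_cancel mult_zero_right zero_neq_one)
qed (use a0 in auto)

text \<open>Orthogonality: summing \<open>lam a * \<psi> (-((b - b^q) * a))\<close> over \<open>a \<in> \<bbbF>\<^sub>q\<close> and all \<open>b\<close>
  gives \<open>0\<close> if no \<open>b\<close> works, but \<open>|\<bbbF>\<^sub>q\<^sub>2|\<close> when summing over \<open>b\<close> first.\<close>

lemma char_Fq_eq_psi_twist: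
  fixes \<psi> lam :: "'a \<Rightarrow> complex"
  assumes psi: "add_char \<psi>" and cond: "conductor_q2 q \<psi>"
    and lm: "\<And>a b. a^q = a \<Longrightarrow> b^q = b \<Longrightarrow> lam (a + b) = lam a * lam b" and l0: "lam 0 = 1"
  shows "\<exists>b. \<forall>a. a^q = a \<longrightarrow> lam a = \<psi> ((b - b^q) * a)"
proof (rule ccontr)
  assume neg: "\<not> ?thesis"
  define F where "F = {a::'a. a^q = a}"
  have vanish: "(\<Sum>a\<in>F. lam a * \<psi> (-((b - b^q) * a))) = 0" for b
    using neg sum_Fq_char_twist_eq_0[OF psi lm] unfolding F_def by blast
  have inner: "lam a * (\<Sum>b\<in>UNIV. \<psi> (-((b - b^q) * a))) = (if a = 0 then of_nat (card (UNIV::'a set)) else 0)"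
    if "a \<in> F" for a
    using that l0 add_char_0[OF psi] sum_psi_twist_eq_0[OF psi cond] by (auto simp: F_def)
  have "0 = (\<Sum>b\<in>UNIV. \<Sum>a\<in>F. lam a * \<psi> (-((b - b^q) * a)))" using vanish by simp
  also have "\<dots> = (\<Sum>a\<in>F. lam a * (\<Sum>b\<in>UNIV. \<psi> (-((b - b^q) * a))))"
    by (simp add: sum.swap[of _ F] sum_distrib_left)
  also have "\<dots> = (\<Sum>a\<in>F. if a = 0 then of_nat (card (UNIV::'a set)) else 0)"
    by (rule sum.cong[OF refl]) (rule inner)
  also have "\<dots> = of_nat (card (UNIV::'a set))" using q_pos by (simp add: F_def)
  finally show False by simp
qed

lemma theta_umid_add:
  fixes \<psi> :: "'a \<Rightarrow> complex" and \<theta> :: "(nat \<Rightarrow> 'a) \<Rightarrow> complex"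
  assumes th: "extends_psi_tilde q h \<psi> \<theta>" and a: "a^q = a" "a'^q = a'"
  shows "\<theta> (umid a 0) * \<theta> (umid a' 0) = \<psi> (a * a'^q) * \<theta> (umid (a + a') 0)"
proof -
  note m = extends_psi_tildeD(1)[OF th] and t = extends_psi_tildeD(2)[OF th]
  have aa: "(a + a')^q = a + a'" using a frobenius_add by simp
  have "\<theta> (umid a 0) * \<theta> (umid a' 0) = \<theta> (umult q h (umid a 0) (umid a' 0))"
    using m umid_H1' a by metis
  also have "\<dots> = \<theta> (tauTop h (a * a'^q)) * \<theta> (umid (a + a') 0)"
    unfolding umult_umid_umid using m H0'_subset_H1'[OF tauTop_H0'] umid_H1'[OF aa] by metis
  finally show ?thesis using t[OF tauTop_H0'] by simp
qed

lemma theta_H1'_eq: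
  fixes \<psi> :: "'a \<Rightarrow> complex" and \<theta> :: "(nat \<Rightarrow> 'a) \<Rightarrow> complex"
  assumes th: "extends_psi_tilde q h \<psi> \<theta>" and n: "n \<in> H1' q h"
  shows "\<theta> n = \<theta> (umid (n mid) 0) * \<psi> (n tdeg)"
proof -
  obtain n0: "n(mid := 0) \<in> H0' h" and split: "n = umult q h (umid (n mid) 0) (n(mid := 0))"
    using H1'_split[OF n] by blast
  have "umid (n mid) 0 \<in> H1' q h" using n umid_H1' by (simp add: H1'_iff)
  then have "\<theta> n = \<theta> (umid (n mid) 0) * \<psi> ((n(mid := 0)) tdeg)"
    using extends_psi_tildeD[OF th] H0'_subset_H1'[OF n0] n0 split by metis
  then show ?thesis using deg_facts(2) by simp
qed

text \<open>The ratio of two extensions is a character of \<open>a \<mapsto> 1 + a \<tau>\<^bsup>h-1\<^esup>\<close>, \<open>a \<in> \<bbbF>\<^sub>q\<close>.\<close>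

lemma extensions_differ_by_twist:
  fixes \<psi> :: "'a \<Rightarrow> complex" and \<theta>1 \<theta>2 :: "(nat \<Rightarrow> 'a) \<Rightarrow> complex"
  assumes psi: "add_char \<psi>" and cond: "conductor_q2 q \<psi>"
    and th1: "extends_psi_tilde q h \<psi> \<theta>1" and th2: "extends_psi_tilde q h \<psi> \<theta>2"
  shows "\<exists>b. \<forall>n\<in>H1' q h. \<theta>2 n = \<theta>1 n * \<psi> ((b - b^q) * n mid)"
proof -
  have nz1: "\<And>c. c \<in> H1' q h \<Longrightarrow> \<theta>1 c \<noteq> 0" using th1 by (simp add: extends_psi_tilde_def is_char_def)
  have pnz: "\<And>x. \<psi> x \<noteq> 0" using psi by (simp add: add_char_def)
  define lam where "lam a = \<theta>2 (umid a 0) / \<theta>1 (umid a 0)" for a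
  have "\<exists>b. \<forall>a. a^q = a \<longrightarrow> lam a = \<psi> ((b - b^q) * a)"
  proof (rule char_Fq_eq_psi_twist[OF psi cond])
    show "lam (a + b) = lam a * lam b" if "a^q = a" "b^q = b" for a b
      using theta_umid_add[OF th1 that] theta_umid_add[OF th2 that] pnz nz1 umid_H1' that
      unfolding lam_def by (simp add: frobenius_add field_simps)
    show "lam 0 = 1"
      using extends_psi_tildeD(2)[OF th1 tauTop_H0'] extends_psi_tildeD(2)[OF th2 tauTop_H0'] add_char_0[OF psi]
      unfolding lam_def by (simp add: tauTop_eq_umid)
  qed
  then obtain b where b: "\<And>a. a^q = a \<Longrightarrow> lam a = \<psi> ((b - b^q) * a)" by blast
  have "\<theta>2 n = \<theta>1 n * \<psi> ((b - b^q) * n mid)" if n: "n \<in> H1' q h" for n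
  proof -
    have nq: "n mid ^ q = n mid" and "umid (n mid) 0 \<in> H1' q h"
      using n umid_H1' by (simp_all add: H1'_iff)
    then have "\<theta>2 (umid (n mid) 0) = \<theta>1 (umid (n mid) 0) * \<psi> ((b - b^q) * n mid)"
      using b[OF nq] nz1 unfolding lam_def by (simp add: field_simps)
    then show ?thesis using theta_H1'_eq[OF th1 n] theta_H1'_eq[OF th2 n] by simp
  qed
  then show ?thesis by blast
qed

lemma chi_tilde_twist:
  fixes \<psi> :: "'a \<Rightarrow> complex" and \<chi> \<theta>1 \<theta>2 :: "(nat \<Rightarrow> 'a) \<Rightarrow> complex"
  assumes chi: "\<chi> \<in> A_psi q h \<psi>"
    and th1: "extends_psi_tilde q h \<psi> \<theta>1" and th2: "extends_psi_tilde q h \<psi> \<theta>2"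
    and b: "\<forall>n\<in>H1' q h. \<theta>2 n = \<theta>1 n * \<psi> ((b - b^q) * n mid)"
    and x: "x \<in> H' q h"
  shows "chi_tilde q h \<chi> \<theta>2 x = chi_tilde q h \<chi> \<theta>1 x * \<psi> ((b - b^q) * x mid)"
proof -
  obtain k n where k: "k \<in> Hset h" and n: "n \<in> H1' q h" and xkn: "x = umult q h k n" and nx: "n mid = x mid"
    using H'_decomp[OF x] by blast
  show ?thesis unfolding xkn chi_tilde_umult[OF chi th1 k n] chi_tilde_umult[OF chi th2 k n]
    using b n nx xkn by simp
qed

section \<open>Induced representations\<close>

definition Ind_shift :: "(nat \<Rightarrow> 'a) \<Rightarrow> ((nat \<Rightarrow> 'a) \<Rightarrow> complex) \<Rightarrow> (nat \<Rightarrow> 'a) \<Rightarrow> complex" where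
  "Ind_shift u f = (\<lambda>g. if g \<in> Ucar h then f (umult q h u g) else 0)"

lemma Ind_shift_IndSp:
  fixes u :: "nat \<Rightarrow> 'a" and c1 c2 :: "(nat \<Rightarrow> 'a) \<Rightarrow> complex"
  assumes u: "u \<in> Ucar h" and KU: "K \<subseteq> Ucar h"
    and conj: "\<And>x. x \<in> K \<Longrightarrow> umult q h (umult q h u x) (inv\<^bsub>Ugrp\<^esub> u) \<in> K \<and>
       c1 (umult q h (umult q h u x) (inv\<^bsub>Ugrp\<^esub> u)) = c2 x"
    and f: "f \<in> IndSp q h K c1"
  shows "Ind_shift u f \<in> IndSp q h K c2"
proof -
  have "Ind_shift u f (umult q h x g) = c2 x * Ind_shift u f g" if x: "x \<in> K" and g: "g \<in> Ucar h" for x g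
  proof -
    have xU: "x \<in> Ucar h" using x KU by blast
    have "umult q h u (umult q h x g) = umult q h (umult q h (umult q h u x) (inv\<^bsub>Ugrp\<^esub> u)) (umult q h u g)"
      using u g xU by (simp add: umult_assoc inv_umult_cancel_left)
    then show ?thesis
      using f conj[OF x] g xU u by (simp add: Ind_shift_def IndSp_def umult_Ucar)
  qed
  then show ?thesis by (simp add: IndSp_def Ind_shift_def)
qed

lemma Ind_shift_inv:
  assumes u: "u \<in> Ucar h" and f: "f \<in> IndSp q h K c"
  shows "Ind_shift (inv\<^bsub>Ugrp\<^esub> u) (Ind_shift u f) = f" and "Ind_shift u (Ind_shift (inv\<^bsub>Ugrp\<^esub> u) f) = f"
  using u f inv_Ucar[OF u]
  by (auto simp: Ind_shift_def IndSp_def umult_Ucar umult_inv_cancel_left inv_umult_cancel_left)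

lemma Ind_shift_IndAct:
  assumes "u \<in> Ucar h" and "x \<in> Ucar h"
  shows "Ind_shift u (IndAct q h x f) = IndAct q h x (Ind_shift u f)"
  using assms by (intro ext) (auto simp: Ind_shift_def IndAct_def umult_assoc umult_Ucar)

lemma Ind_iso_conj:
  fixes u :: "nat \<Rightarrow> 'a" and c1 c2 :: "(nat \<Rightarrow> 'a) \<Rightarrow> complex"
  assumes u: "u \<in> Ucar h" and KU: "K \<subseteq> Ucar h"
    and conj1: "\<And>x. x \<in> K \<Longrightarrow> umult q h (umult q h u x) (inv\<^bsub>Ugrp\<^esub> u) \<in> K \<and>
       c1 (umult q h (umult q h u x) (inv\<^bsub>Ugrp\<^esub> u)) = c2 x"
    and conj2: "\<And>x. x \<in> K \<Longrightarrow> umult q h (umult q h (inv\<^bsub>Ugrp\<^esub> u) x) u \<in> K \<and>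
       c2 (umult q h (umult q h (inv\<^bsub>Ugrp\<^esub> u) x) u) = c1 x"
  shows "Ind_iso q h K c1 c2"
  unfolding Ind_iso_def
proof (intro exI[of _ "Ind_shift u"] conjI ballI allI)
  have conj2': "\<And>x. x \<in> K \<Longrightarrow>
      umult q h (umult q h (inv\<^bsub>Ugrp\<^esub> u) x) (inv\<^bsub>Ugrp\<^esub> (inv\<^bsub>Ugrp\<^esub> u)) \<in> K \<and>
      c2 (umult q h (umult q h (inv\<^bsub>Ugrp\<^esub> u) x) (inv\<^bsub>Ugrp\<^esub> (inv\<^bsub>Ugrp\<^esub> u))) = c1 x"
    using conj2 gr.inv_inv u by simp
  show "bij_betw (Ind_shift u) (IndSp q h K c1) (IndSp q h K c2)"
    by (rule bij_betw_byWitness[where f'="Ind_shift (inv\<^bsub>Ugrp\<^esub> u)"])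
      (use Ind_shift_inv u Ind_shift_IndSp[OF u KU conj1] Ind_shift_IndSp[OF inv_Ucar[OF u] KU conj2'] in auto)
  show "Ind_shift u (IndAct q h x f) = IndAct q h x (Ind_shift u f)" if "x \<in> Ucar h" for x f
    by (rule Ind_shift_IndAct[OF u that])
qed (auto simp: Ind_shift_def)

lemma Ind_iso_chi_tilde:
  fixes \<psi> :: "'a \<Rightarrow> complex" and \<chi> \<theta>1 \<theta>2 :: "(nat \<Rightarrow> 'a) \<Rightarrow> complex"
  assumes psi: "add_char \<psi>" and chi: "\<chi> \<in> A_psi q h \<psi>"
    and th1: "extends_psi_tilde q h \<psi> \<theta>1" and th2: "extends_psi_tilde q h \<psi> \<theta>2"
    and b: "\<forall>n\<in>H1' q h. \<theta>2 n = \<theta>1 n * \<psi> ((b - b^q) * n mid)"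
  shows "Ind_iso q h (H' q h) (chi_tilde q h \<chi> \<theta>1) (chi_tilde q h \<chi> \<theta>2)"
proof (rule Ind_iso_conj[OF umid_Ucar])
  note twist = chi_tilde_twist[OF chi th1 th2 b]
  have inv_u: "inv\<^bsub>Ugrp\<^esub> (umid b 0) = umid (-b) (b * b^q)"
    by (simp add: inv_umid)
  have inv_inv_u: "inv\<^bsub>Ugrp\<^esub> (umid (-b) (b * b^q)) = umid b 0"
    using gr.inv_inv[of "umid b 0"] umid_Ucar by (simp add: inv_u)
  have minus_twist: "(-b - (-b)^q) * y = - ((b - b^q) * y)" for y
    using power_q_power_minus[of b 1] by (simp add: algebra_simps)
  show "H' q h \<subseteq> Ucar h" by (auto simp: H'_iff)
  fix x :: "nat \<Rightarrow> 'a" assume x: "x \<in> H' q h"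
  show "umult q h (umult q h (umid b 0) x) (inv\<^bsub>Ugrp\<^esub> (umid b 0)) \<in> H' q h \<and>
      chi_tilde q h \<chi> \<theta>1 (umult q h (umult q h (umid b 0) x) (inv\<^bsub>Ugrp\<^esub> (umid b 0)))
      = chi_tilde q h \<chi> \<theta>2 x"
    using chi_tilde_conj_umid[OF psi chi th1 x, of b 0] twist[OF x] by simp
  show "umult q h (umult q h (inv\<^bsub>Ugrp\<^esub> (umid b 0)) x) (umid b 0) \<in> H' q h \<and>
      chi_tilde q h \<chi> \<theta>2 (umult q h (umult q h (inv\<^bsub>Ugrp\<^esub> (umid b 0)) x) (umid b 0))
      = chi_tilde q h \<chi> \<theta>1 x"
    using chi_tilde_conj_umid[OF psi chi th2 x, of "-b" "b * b^q"] twist[OF x]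
      add_char_minus[OF psi, of "(b - b^q) * x mid"] unfolding inv_u inv_inv_u minus_twist
    by (simp add: mult.assoc)
qed

end

lemma tau_group_intro:
  fixes p q h :: nat
  assumes "prime p" and "\<exists>k>0. q = p ^ k" and "card (UNIV :: 'a::{field,finite} set) = q ^ 2"
    and "even h" and "h \<ge> 2"
  shows "tau_group TYPE('a) q h"
proof
  obtain k where "q = p ^ k" using assms(2) by blast
  then have char: "CHAR('a) = p"
    using CHAR_eq_prime_of_card[OF assms(1)] assms(3) by (simp flip: power_mult)
  show "(x + y) ^ q = x ^ q + y ^ q" for x y :: 'a
    by (rule freshmans_dream') (use assms(1) char \<open>q = p ^ k\<close> in auto)
  show "x ^ (q^2) = x" for x :: 'a
    using finite_field_power_card[of x] assms(3) by simp
  show "0 < q" using \<open>q = p ^ k\<close> prime_gt_0_nat[OF assms(1)] by simp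
qed (use assms in auto)

theorem lemma2p13:
  fixes p q h :: nat
    and \<psi> :: "'a::{field,finite} \<Rightarrow> complex"
    and \<chi> \<theta>1 \<theta>2 :: "(nat \<Rightarrow> 'a) \<Rightarrow> complex"
  assumes "prime p" and "\<exists>k>0. q = p ^ k" and "card (UNIV :: 'a set) = q ^ 2"
    and "even h" and "h \<ge> 2"
    and "add_char \<psi>" and "conductor_q2 q \<psi>"
    and "\<chi> \<in> A_psi q h \<psi>"
    and "extends_psi_tilde q h \<psi> \<theta>1" and "extends_psi_tilde q h \<psi> \<theta>2"
  shows "Ind_iso q h (H' q h) (chi_tilde q h \<chi> \<theta>1) (chi_tilde q h \<chi> \<theta>2)"
proof -
  interpret tau_group "TYPE('a)" q h
    by (rule tau_group_intro[OF assms(1-5)])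
  obtain b where "\<forall>n\<in>H1' q h. \<theta>2 n = \<theta>1 n * \<psi> ((b - b^q) * n mid)"
    using extensions_differ_by_twist[OF assms(6,7,9,10)] by blast
  then show ?thesis
    by (rule Ind_iso_chi_tilde[OF assms(6,8,9,10)])
qed

end
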